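(* Let $n$ be a positive integer, $\pi_1,\pi_2\in\mathrm{NC}_B(n)$, $\psi(\pi_1)=(\sigma_1,x_1)$ and $\psi(\pi_2)=(\sigma_2,x_2)$. Then $\pi_1\le\pi_2$ if and only if $\sigma_1\le\sigma_2$ and one of the following holds: (1) $x_1=x_2=\emptyset$; (2) $x_2$ is an edge $(a,b)$ of $\sigma_2$, and $x_1$ is the unique minimal length edge $(i,j)$ of $\sigma_1$ with $i\le a<b\le j$ if such an edge exists, and $x_1=\emptyset$ otherwise; (3) $x_2$ is a block of $\sigma_2$ and $x_1$ is a block of $\sigma_1$ with $x_1\subseteq x_2$; (4) $x_2$ is a block of $\sigma_2$ and $x_1$ is an edge $(i,j)$ of $\sigma_1$ with $i,j\in x_2$; (5) $x_2$ is a block of $\sigma_2$, and $x_1$ is the minimal length edge $(i,j)$ of $\sigma_1$ with $i<\min(x_2)\le\max(x_2)<j$ if such an edge exists, and $x_1=\emptyset$ otherwise.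
   Context: $[\pm n]=\{1,\dots,n,-1,\dots,-n\}$. A partition of type $B_n$ is a partition $\pi$ of $[\pm n]$ such that $-B$ is a block whenever $B$ is, with at most one block (zero block) satisfying $B=-B$; it is noncrossing if, in the linear order $1<\cdots<n<-1<\cdots<-n$, there are no $a<b<c<d$ with $a,c$ in one block and $b,d$ in another. $\mathrm{NC}_B(n)$ is the set of these, ordered by refinement; $\mathrm{NC}(n)$ is the poset of noncrossing partitions of $[n]$ ordered by refinement. An edge of $\sigma\in\mathrm{NC}(n)$ is a pair $(i,j)$, $i<j$, with $i,j$ in a common block containing no integer strictly between them; its length is $j-i$. The map $\psi$: given $\pi\in\mathrm{NC}_B(n)$, let $\eta\in\mathrm{NC}(n)$ be obtained by deleting all negative integers from the blocks of $\pi$ (discarding empty sets), and let $X$ be the set of blocks $A$ of $\eta$ such that the block of $\pi$ containing $A$ also contains a negative integer. Write $X=\{A_1,\dots,A_m\}$ with $\max A_1<\cdots<\max A_m$. Let $\sigma$ be obtained from $\eta$ by merging $A_i$ and $A_{m+1-i}$ for $i=1,\dots,\lfloor m/2\rfloor$, and let $x=\emptyset$ if $m=0$, $x=(\max A_{m/2},\min A_{m/2+1})$ if $m>0$ is even, and $x=A_{(m+1)/2}$ if $m$ is odd. Then $\psi(\pi)=(\sigma,x)$. *)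

theory Defs
  imports Main
begin

text \<open>Ground set [+-n] = {1..n, -1..-n}, represented as nonzero integers of absolute value at most n.\<close>
definition signed_set :: "nat \<Rightarrow> int set" where
  "signed_set n = {k. k \<noteq> 0 \<and> \<bar>k\<bar> \<le> int n}"

text \<open>Position in the linear order 1 < ... < n < -1 < ... < -n.\<close>
definition rankB :: "nat \<Rightarrow> int \<Rightarrow> int" where
  "rankB n k = (if k > 0 then k else int n - k)"

definition is_set_partition :: "'a set \<Rightarrow> 'a set set \<Rightarrow> bool" where
  "is_set_partition S P \<longleftrightarrow>
     (\<forall>B\<in>P. B \<noteq> {}) \<and> \<Union>P = S \<and> (\<forall>B\<in>P. \<forall>C\<in>P. B \<noteq> C \<longrightarrow> B \<inter> C = {})"

definition noncrossing_wrt :: "('a \<Rightarrow> int) \<Rightarrow> 'a set set \<Rightarrow> bool" where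
  "noncrossing_wrt r P \<longleftrightarrow>
     \<not> (\<exists>B1\<in>P. \<exists>B2\<in>P. B1 \<noteq> B2 \<and>
          (\<exists>a b c d. a \<in> B1 \<and> c \<in> B1 \<and> b \<in> B2 \<and> d \<in> B2 \<and>
                     r a < r b \<and> r b < r c \<and> r c < r d))"

definition NCB :: "nat \<Rightarrow> int set set set" where
  "NCB n = {P. is_set_partition (signed_set n) P
              \<and> (\<forall>B\<in>P. uminus ` B \<in> P)
              \<and> (\<forall>B\<in>P. \<forall>C\<in>P. uminus ` B = B \<and> uminus ` C = C \<longrightarrow> B = C)
              \<and> noncrossing_wrt (rankB n) P}"

definition NC :: "nat \<Rightarrow> int set set set" where
  "NC n = {P. is_set_partition {1..int n} P \<and> noncrossing_wrt id P}"

definition refines :: "'a set set \<Rightarrow> 'a set set \<Rightarrow> bool" where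
  "refines P Q \<longleftrightarrow> (\<forall>B\<in>P. \<exists>C\<in>Q. B \<subseteq> C)"

definition is_edge :: "int set set \<Rightarrow> int \<Rightarrow> int \<Rightarrow> bool" where
  "is_edge \<sigma> i j \<longleftrightarrow> i < j \<and> (\<exists>B\<in>\<sigma>. i \<in> B \<and> j \<in> B \<and> (\<forall>k\<in>B. \<not> (i < k \<and> k < j)))"

datatype xval = XEmpty | XEdge int int | XBlock "int set"

text \<open>A_i (1-based) : the block of X with the i-th smallest maximum.\<close>
definition A_of :: "int set set \<Rightarrow> nat \<Rightarrow> int set" where
  "A_of X i = (THE A. A \<in> X \<and> Max A = sorted_list_of_set (Max ` X) ! (i - 1))"

definition psi :: "nat \<Rightarrow> int set set \<Rightarrow> int set set \<times> xval" where
  "psi n \<pi> =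
    (let \<eta> = {B \<inter> {1..int n} | B. B \<in> \<pi>} - {{}};
         X = {A \<in> \<eta>. \<exists>B\<in>\<pi>. A \<subseteq> B \<and> (\<exists>k\<in>B. k < 0)};
         m = card X;
         A = A_of X;
         \<sigma> = (\<eta> - {A i | i. 1 \<le> i \<and> i \<le> m div 2} - {A (m + 1 - i) | i. 1 \<le> i \<and> i \<le> m div 2})
              \<union> {A i \<union> A (m + 1 - i) | i. 1 \<le> i \<and> i \<le> m div 2};
         x = (if m = 0 then XEmpty
              else if even m then XEdge (Max (A (m div 2))) (Min (A (m div 2 + 1)))
              else XBlock (A ((m + 1) div 2)))
     in (\<sigma>, x))"

end

theory Submission
  imports Defs
begin

text \<open>
  Write B+ for the positive elements of a block B and B- for the absolute values of its negative
  elements. Non-crossingness forces a block meeting both signs to be either the zero block, where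
  B+ = B-, or to have B+ entirely below B- (possibly after replacing B by -B). The sets A_i in
  the definition of \<open>\<psi>\<close> are the parts B+ of these mixed blocks ordered by their maxima, and
  since the maxima of the B- decrease when those of the B+ increase, A_(m+1-i) is the negative
  part of the block of A_i. Hence \<open>\<sigma>\<close> is the set of all |B|, and x is empty if no block is
  mixed, is B+ for the zero block if there is one, and otherwise is the edge from max B+ to
  min B- for the innermost block with B+ below B-. A block of \<open>\<pi>1\<close> lies in a block of \<open>\<pi>2\<close>
  iff its absolute value lies in one of \<open>\<sigma>2\<close> with matching signs, and the signs that are not
  determined by \<open>\<sigma>1 \<le> \<sigma>2\<close> are controlled exactly by conditions (1)-(5) on x1 and x2.
\<close>

section \<open>Positive and negative parts of a block\<close>

definition pos_part :: "int set \<Rightarrow> int set" where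
  "pos_part B = {k\<in>B. 0 < k}"

definition neg_part :: "int set \<Rightarrow> int set" where
  "neg_part B = {k. 0 < k \<and> -k \<in> B}"

definition mixed :: "int set \<Rightarrow> bool" where
  "mixed B \<longleftrightarrow> pos_part B \<noteq> {} \<and> neg_part B \<noteq> {}"

definition pos_below_neg :: "int set \<Rightarrow> bool" where
  "pos_below_neg B \<longleftrightarrow> mixed B \<and> (\<forall>p\<in>pos_part B. \<forall>q\<in>neg_part B. p < q)"

definition normalized :: "int set \<Rightarrow> bool" where
  "normalized B \<longleftrightarrow> neg_part B = {} \<or> pos_below_neg B \<or> uminus ` B = B"

lemma pos_partD: "p \<in> pos_part B \<Longrightarrow> p \<in> B \<and> 0 < p"
  by (simp add: pos_part_def)

lemma neg_partD: "q \<in> neg_part B \<Longrightarrow> -q \<in> B \<and> 0 < q"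
  by (simp add: neg_part_def)

lemma pos_partI: "p \<in> B \<Longrightarrow> 0 < p \<Longrightarrow> p \<in> pos_part B"
  by (simp add: pos_part_def)

lemma neg_partI: "-q \<in> B \<Longrightarrow> 0 < q \<Longrightarrow> q \<in> neg_part B"
  by (simp add: neg_part_def)

lemma pos_part_subset: "pos_part B \<subseteq> B"
  unfolding pos_part_def by auto

lemma neg_part_subset: "neg_part B \<subseteq> uminus ` B"
  unfolding neg_part_def by force

lemma pos_neg_part_mono: "B \<subseteq> C \<Longrightarrow> pos_part B \<subseteq> pos_part C \<and> neg_part B \<subseteq> neg_part C"
  unfolding pos_part_def neg_part_def by auto

lemma mem_uminus_imageI: "-(k::int) \<in> B \<Longrightarrow> k \<in> uminus ` B"
  by force

lemma uminus_image_subset_iff: "uminus ` (B::int set) \<subseteq> C \<longleftrightarrow> B \<subseteq> uminus ` C"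
  by (auto simp: image_subset_iff intro: mem_uminus_imageI)

lemma uminus_image_uminus [simp]: "uminus ` uminus ` (B::int set) = B"
  by (simp add: image_image)

lemma abs_image_uminus [simp]: "abs ` uminus ` (B::int set) = abs ` B"
  by (force simp: image_image)

lemma pos_part_uminus [simp]: "pos_part (uminus ` B) = neg_part B"
  unfolding pos_part_def neg_part_def by force

lemma neg_part_uminus [simp]: "neg_part (uminus ` B) = pos_part B"
  unfolding pos_part_def neg_part_def by force

lemma mixed_uminus [simp]: "mixed (uminus ` B) = mixed B"
  unfolding mixed_def by auto

lemma pos_below_neg_mixed: "pos_below_neg B \<Longrightarrow> mixed B"
  unfolding pos_below_neg_def by simp

lemma zero_block_pos_eq_neg: "uminus ` B = B \<Longrightarrow> pos_part B = neg_part B"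
  using pos_part_uminus[of B] by simp

lemma pos_below_neg_not_zero: "pos_below_neg B \<Longrightarrow> uminus ` B \<noteq> B"
proof
  assume B: "pos_below_neg B" "uminus ` B = B"
  then obtain p where "p \<in> pos_part B"
    unfolding pos_below_neg_def mixed_def by auto
  moreover from B(2) have "pos_part B = neg_part B"
    by (rule zero_block_pos_eq_neg)
  ultimately show False
    using B(1) unfolding pos_below_neg_def by auto
qed

lemma abs_block:
  assumes "0 \<notin> B"
  shows "abs ` B = pos_part B \<union> neg_part B"
proof
  show "abs ` B \<subseteq> pos_part B \<union> neg_part B"
  proof
    fix x assume "x \<in> abs ` B"
    then obtain k where k: "k \<in> B" "x = \<bar>k\<bar>" by auto
    moreover have "k \<noteq> 0" using k assms by auto
    ultimately show "x \<in> pos_part B \<union> neg_part B"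
      by (cases "0 < k") (auto simp: pos_part_def neg_part_def)
  qed
  show "pos_part B \<union> neg_part B \<subseteq> abs ` B"
  proof
    fix k assume "k \<in> pos_part B \<union> neg_part B"
    then have "k \<in> B \<and> \<bar>k\<bar> = k \<or> -k \<in> B \<and> \<bar>-k\<bar> = k"
      by (auto simp: pos_part_def neg_part_def)
    then show "k \<in> abs ` B"
      by (metis image_eqI)
  qed
qed

lemma block_decomp:
  assumes "0 \<notin> B"
  shows "B = pos_part B \<union> uminus ` neg_part B"
proof
  show "B \<subseteq> pos_part B \<union> uminus ` neg_part B"
  proof
    fix k assume k: "k \<in> B"
    show "k \<in> pos_part B \<union> uminus ` neg_part B"
    proof (cases "0 < k")
      case True
      then show ?thesis using k by (simp add: pos_part_def)
    next
      case False
      then have "-k \<in> neg_part B" using k assms by (cases "k = 0") (auto simp: neg_part_def)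
      then show ?thesis by (simp add: mem_uminus_imageI)
    qed
  qed
  show "pos_part B \<union> uminus ` neg_part B \<subseteq> B"
    by (auto simp: pos_part_def neg_part_def)
qed

lemma block_subsetI:
  assumes "0 \<notin> B" "pos_part B \<subseteq> pos_part C" "neg_part B \<subseteq> neg_part C"
  shows "B \<subseteq> C"
proof -
  have "pos_part B \<union> uminus ` neg_part B \<subseteq> C"
    using assms(2,3) by (auto simp: pos_part_def neg_part_def)
  then show ?thesis
    using block_decomp[OF assms(1)] by simp
qed

lemma abs_pure_block: "0 \<notin> B \<Longrightarrow> neg_part B = {} \<Longrightarrow> abs ` B = B"
  using abs_block block_decomp by fastforce

lemma block_subset_if_parts_disjoint:
  assumes "0 \<notin> B" "0 \<notin> C" "abs ` B \<subseteq> abs ` C"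
    and "pos_part B \<inter> neg_part C = {}" "neg_part B \<inter> pos_part C = {}"
  shows "B \<subseteq> C"
proof (rule block_subsetI[OF assms(1)])
  have "pos_part B \<union> neg_part B \<subseteq> pos_part C \<union> neg_part C"
    using assms(3) unfolding abs_block[OF assms(1)] abs_block[OF assms(2)] .
  then show "pos_part B \<subseteq> pos_part C" "neg_part B \<subseteq> neg_part C"
    using assms(4,5) by blast+
qed

lemma pure_block_subset:
  "abs ` B \<subseteq> abs ` C \<Longrightarrow> 0 \<notin> B \<Longrightarrow> 0 \<notin> C \<Longrightarrow> neg_part B = {} \<Longrightarrow> neg_part C = {} \<Longrightarrow> B \<subseteq> C"
  using abs_pure_block by metis

lemma pure_block_subset_abs:
  "abs ` B \<subseteq> abs ` C \<Longrightarrow> 0 \<notin> B \<Longrightarrow> 0 \<notin> C \<Longrightarrow> neg_part B = {} \<Longrightarrow> B \<subseteq> pos_part C \<union> neg_part C"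
  using abs_pure_block abs_block by metis

section \<open>Order-theoretic facts\<close>

lemma sorted_list_of_set_nth_card_less:
  fixes S :: "'a::linorder set"
  assumes "finite S" "s \<in> S"
  shows "sorted_list_of_set S ! card {t\<in>S. t < s} = s"
proof -
  let ?L = "sorted_list_of_set S"
  have sw: "sorted_wrt (<) ?L" by (simp add: assms(1))
  have dist: "distinct ?L" by simp
  obtain k where k: "k < length ?L" "?L ! k = s"
    using assms by (metis in_set_conv_nth set_sorted_list_of_set)
  have "{t\<in>S. t < s} = set (take k ?L)"
  proof
    show "{t\<in>S. t < s} \<subseteq> set (take k ?L)"
    proof
      fix t assume t: "t \<in> {t\<in>S. t < s}"
      then obtain j where j: "j < length ?L" "?L ! j = t"
        using assms by (metis in_set_conv_nth mem_Collect_eq set_sorted_list_of_set)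
      have "j < k"
      proof (rule ccontr)
        assume "\<not> j < k"
        hence "k \<le> j" by simp
        hence "?L ! k \<le> ?L ! j"
          using sw j(1) by (metis sorted_iff_nth_mono sorted_list_of_set(2))
        thus False using t j k by auto
      qed
      thus "t \<in> set (take k ?L)"
        using j k by (metis in_set_conv_nth length_take min.absorb4 min_less_iff_conj nth_take)
    qed
    show "set (take k ?L) \<subseteq> {t\<in>S. t < s}"
    proof
      fix t assume "t \<in> set (take k ?L)"
      then obtain j where j: "j < k" "?L ! j = t" using k by (auto simp: in_set_conv_nth)
      have "?L ! j < ?L ! k" using sorted_wrt_nth_less[OF sw j(1)] k(1) by simp
      thus "t \<in> {t\<in>S. t < s}" using j k assms
        by (metis (mono_tags, lifting) dual_order.strict_trans mem_Collect_eq nth_mem set_sorted_list_of_set)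
    qed
  qed
  hence "card {t\<in>S. t < s} = k" using dist k by (simp add: distinct_card)
  thus ?thesis using k by simp
qed

lemma card_less_Suc_card_greater:
  fixes g :: "'a \<Rightarrow> 'b::linorder"
  assumes fin: "finite X" and inj: "inj_on g X" and x: "x \<in> X"
  shows "card {y\<in>X. g y < g x} + 1 + card {y\<in>X. g x < g y} = card X"
proof -
  have split: "X = ({y\<in>X. g y < g x} \<union> {y\<in>X. g x < g y}) \<union> {x}"
    using inj x by (auto simp: inj_on_def) (metis linorder_neq_iff)
  have "card X = card ({y\<in>X. g y < g x} \<union> {y\<in>X. g x < g y}) + card {x}"
    by (subst split, rule card_Un_disjoint) (use fin in auto)
  also have "card ({y\<in>X. g y < g x} \<union> {y\<in>X. g x < g y}) = card {y\<in>X. g y < g x} + card {y\<in>X. g x < g y}"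
    by (rule card_Un_disjoint) (use fin in auto)
  finally show ?thesis by simp
qed

lemma card_less_involution:
  fixes g :: "'a \<Rightarrow> 'b::linorder"
  assumes fin: "finite X" and inj: "inj_on g X" and f_in: "\<And>x. x \<in> X \<Longrightarrow> f x \<in> X"
    and inv: "\<And>x. x \<in> X \<Longrightarrow> f (f x) = x"
    and anti: "\<And>x y. x \<in> X \<Longrightarrow> y \<in> X \<Longrightarrow> g x < g y \<Longrightarrow> g (f y) < g (f x)"
    and x: "x \<in> X"
  shows "card {y\<in>X. g y < g (f x)} = card X - 1 - card {y\<in>X. g y < g x}"
proof -
  have "{y\<in>X. g y < g (f x)} = f ` {y\<in>X. g x < g y}"
  proof
    show "{y\<in>X. g y < g (f x)} \<subseteq> f ` {y\<in>X. g x < g y}"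
    proof
      fix y assume y: "y \<in> {y\<in>X. g y < g (f x)}"
      then have "g (f (f x)) < g (f y)" using anti[of y "f x"] f_in x by auto
      then have "g x < g (f y)" using inv x by simp
      moreover have "y = f (f y)" using inv y by auto
      ultimately show "y \<in> f ` {y\<in>X. g x < g y}" using y f_in by blast
    qed
    show "f ` {y\<in>X. g x < g y} \<subseteq> {y\<in>X. g y < g (f x)}" using anti x f_in by auto
  qed
  moreover have "inj_on f X"
    by (rule inj_onI) (metis inv)
  ultimately have "card {y\<in>X. g y < g (f x)} = card {y\<in>X. g x < g y}"
    by (metis (no_types, lifting) card_image inj_on_subset mem_Collect_eq subsetI)
  then show ?thesis
    using card_less_Suc_card_greater[OF fin inj x] by simp
qed

lemma gap_between:
  fixes S :: "'a::linorder set"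
  assumes "finite S" "u \<in> S" "v \<in> S" "u \<le> L" "R \<le> v" "L < R" "\<forall>k\<in>S. k \<le> L \<or> R \<le> k"
  shows "\<exists>i j. i \<in> S \<and> j \<in> S \<and> i \<le> L \<and> R \<le> j \<and> (\<forall>k\<in>S. \<not> (i < k \<and> k < j))"
proof -
  define i where "i = Max {k\<in>S. k \<le> L}"
  define j where "j = Min {k\<in>S. R \<le> k}"
  have f1: "finite {k\<in>S. k \<le> L}" "finite {k\<in>S. R \<le> k}" using assms(1) by auto
  have n1: "{k\<in>S. k \<le> L} \<noteq> {}" "{k\<in>S. R \<le> k} \<noteq> {}" using assms by auto
  have i: "i \<in> S" "i \<le> L" using Max_in[OF f1(1) n1(1)] unfolding i_def by auto
  have j: "j \<in> S" "R \<le> j" using Min_in[OF f1(2) n1(2)] unfolding j_def by auto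
  have "\<forall>k\<in>S. \<not> (i < k \<and> k < j)"
  proof (intro ballI notI)
    fix k assume k: "k \<in> S" "i < k \<and> k < j"
    show False
    proof (cases "k \<le> L")
      case True hence "k \<le> i" unfolding i_def using f1(1) k(1) by (simp add: Max_ge)
      thus False using k by (simp add: not_le[symmetric])
    next
      case False hence "R \<le> k" using assms(7) k(1) by auto
      hence "j \<le> k" unfolding j_def using f1(2) k(1) by (simp add: Min_le)
      thus False using k by (simp add: not_le[symmetric])
    qed
  qed
  thus ?thesis using i j by blast
qed

section \<open>Blocks of a noncrossing partition of type B\<close>

locale ncb_partition =
  fixes n :: nat and P :: "int set set"
  assumes ncb: "P \<in> NCB n"
begin

lemma ncb_conditions:
  "is_set_partition (signed_set n) P \<and> (\<forall>B\<in>P. uminus ` B \<in> P)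
   \<and> (\<forall>B\<in>P. \<forall>C\<in>P. uminus ` B = B \<and> uminus ` C = C \<longrightarrow> B = C)
   \<and> noncrossing_wrt (rankB n) P"
  using ncb unfolding NCB_def by (rule CollectD)

lemma partition: "is_set_partition (signed_set n) P"
  using ncb_conditions by (rule conjunct1)

lemma uminus_block: "B \<in> P \<Longrightarrow> uminus ` B \<in> P"
  using ncb_conditions by blast

lemma zero_block_unique: "B \<in> P \<Longrightarrow> C \<in> P \<Longrightarrow> uminus ` B = B \<Longrightarrow> uminus ` C = C \<Longrightarrow> B = C"
  using ncb_conditions by blast

lemma no_crossing:
  assumes "B1 \<in> P" "B2 \<in> P" "B1 \<noteq> B2" "a \<in> B1" "c \<in> B1" "b \<in> B2" "d \<in> B2"
    and "rankB n a < rankB n b" "rankB n b < rankB n c" "rankB n c < rankB n d"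
  shows False
proof -
  have "\<exists>B1\<in>P. \<exists>B2\<in>P. B1 \<noteq> B2 \<and>
          (\<exists>a b c d. a \<in> B1 \<and> c \<in> B1 \<and> b \<in> B2 \<and> d \<in> B2 \<and>
                     rankB n a < rankB n b \<and> rankB n b < rankB n c \<and> rankB n c < rankB n d)"
    using assms by (intro bexI[OF _ assms(1)] bexI[OF _ assms(2)]) blast
  moreover have "noncrossing_wrt (rankB n) P"
    using ncb_conditions by (elim conjE)
  ultimately show False
    unfolding noncrossing_wrt_def by (rule notE[rotated])
qed

lemma block_nonempty: "B \<in> P \<Longrightarrow> B \<noteq> {}"
  using partition by (auto simp: is_set_partition_def)

lemma block_subset: "B \<in> P \<Longrightarrow> B \<subseteq> signed_set n"
  using partition by (auto simp: is_set_partition_def)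

lemma block_elem: "B \<in> P \<Longrightarrow> k \<in> B \<Longrightarrow> k \<noteq> 0 \<and> \<bar>k\<bar> \<le> int n"
  using block_subset by (auto simp: signed_set_def)

lemma zero_notin_block: "B \<in> P \<Longrightarrow> 0 \<notin> B"
  using block_elem by blast

lemma block_eq: "B \<in> P \<Longrightarrow> C \<in> P \<Longrightarrow> k \<in> B \<Longrightarrow> k \<in> C \<Longrightarrow> B = C"
  using partition unfolding is_set_partition_def by blast

lemma finite_block: "B \<in> P \<Longrightarrow> finite B"
proof (rule finite_subset)
  show "B \<in> P \<Longrightarrow> B \<subseteq> {-int n..int n}"
    using block_elem by force
qed simp

lemma finite_partition: "finite P"
proof (rule finite_subset)
  show "P \<subseteq> Pow {-int n..int n}"
    using block_elem by fastforce
qed simp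

lemma finite_pos_part: "B \<in> P \<Longrightarrow> finite (pos_part B)"
  using finite_block[of B] by (simp add: pos_part_def)

lemma finite_neg_part: "B \<in> P \<Longrightarrow> finite (neg_part B)"
  using finite_pos_part[OF uminus_block] by (metis pos_part_uminus)

lemma pure_block_pos: "B \<in> P \<Longrightarrow> neg_part B = {} \<Longrightarrow> k \<in> B \<Longrightarrow> 0 < k"
  using block_elem[of B k] neg_partI[of "-k" B] by (cases "0 < k") auto

lemma abs_block_pos: "B \<in> P \<Longrightarrow> k \<in> abs ` B \<Longrightarrow> 0 < k"
  using block_elem by force

text \<open>
  Special cases of non-crossingness in the order 1 < ... < n < -1 < ... < -n; the suffix lists
  the signs of a, b, c, d.
\<close>

lemma no_crossing_pppn:
  "B1 \<in> P \<Longrightarrow> B2 \<in> P \<Longrightarrow> B1 \<noteq> B2 \<Longrightarrow> a \<in> B1 \<Longrightarrow> c \<in> B1 \<Longrightarrow> b \<in> B2 \<Longrightarrow> d \<in> B2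
   \<Longrightarrow> 0 < a \<Longrightarrow> a < b \<Longrightarrow> b < c \<Longrightarrow> d < 0 \<Longrightarrow> False"
  using no_crossing[of B1 B2 a c b d] block_elem[of B1 c] by (auto simp: rankB_def)

lemma no_crossing_pnnn:
  "B1 \<in> P \<Longrightarrow> B2 \<in> P \<Longrightarrow> B1 \<noteq> B2 \<Longrightarrow> a \<in> B1 \<Longrightarrow> c \<in> B1 \<Longrightarrow> b \<in> B2 \<Longrightarrow> d \<in> B2
   \<Longrightarrow> 0 < a \<Longrightarrow> b < 0 \<Longrightarrow> c < 0 \<Longrightarrow> d < 0 \<Longrightarrow> -b < -c \<Longrightarrow> -c < -d \<Longrightarrow> False"
  using no_crossing[of B1 B2 a c b d] block_elem[of B1 a] by (auto simp: rankB_def)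

lemma no_crossing_ppnn:
  "B1 \<in> P \<Longrightarrow> B2 \<in> P \<Longrightarrow> B1 \<noteq> B2 \<Longrightarrow> a \<in> B1 \<Longrightarrow> c \<in> B1 \<Longrightarrow> b \<in> B2 \<Longrightarrow> d \<in> B2
   \<Longrightarrow> 0 < a \<Longrightarrow> a < b \<Longrightarrow> c < 0 \<Longrightarrow> d < 0 \<Longrightarrow> -c < -d \<Longrightarrow> False"
  using no_crossing[of B1 B2 a c b d] block_elem[of B2 b] by (auto simp: rankB_def)

lemma pos_neg_part_disjoint:
  assumes B: "B \<in> P" "uminus ` B \<noteq> B" "k \<in> pos_part B" "k \<in> neg_part B"
  shows "False"
proof -
  have "k \<in> B" using pos_partD[OF B(3)] by simp
  moreover have "k \<in> uminus ` B" using neg_part_subset B(4) by blast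
  ultimately have "B = uminus ` B" using block_eq[OF B(1) uminus_block[OF B(1)]] by blast
  thus False using B(2) by simp
qed

lemma no_neg_between_pos:
  assumes h: "B \<in> P" "uminus ` B \<noteq> B" "p \<in> pos_part B" "p' \<in> pos_part B" "q \<in> neg_part B" "p < q" "q < p'"
  shows "False"
proof -
  have "q \<in> uminus ` B" using neg_part_subset h(5) by blast
  moreover have "-p \<in> uminus ` B" using pos_partD[OF h(3)] by simp
  ultimately show False
    using no_crossing_pppn[OF h(1) uminus_block[OF h(1)] h(2)[symmetric], of p p' q "-p"] pos_partD[OF h(3)] pos_partD[OF h(4)] h(6,7)
    by auto
qed

lemma no_pos_between_neg:
  assumes h: "B \<in> P" "uminus ` B \<noteq> B" "q \<in> neg_part B" "q' \<in> neg_part B" "p \<in> pos_part B" "q < p" "p < q'"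
  shows "False"
proof -
  have "uminus ` B \<in> P" using uminus_block[OF h(1)] .
  moreover have "pos_part (uminus ` B) = neg_part B" "neg_part (uminus ` B) = pos_part B" by simp_all
  moreover have "uminus ` (uminus ` B) \<noteq> uminus ` B" using h(2) by auto
  ultimately show False using no_neg_between_pos[of "uminus ` B" q q' p] h by auto
qed

lemma mixed_block_sorted:
  assumes h: "B \<in> P" "mixed B" "uminus ` B \<noteq> B"
  shows "pos_below_neg B \<or> pos_below_neg (uminus ` B)"
proof -
  have ne: "pos_part B \<noteq> {}" "neg_part B \<noteq> {}" using h(2) by (auto simp: mixed_def)
  define p0 where "p0 = Min (pos_part B)"
  define q0 where "q0 = Min (neg_part B)"
  have p0: "p0 \<in> pos_part B" "\<And>p. p \<in> pos_part B \<Longrightarrow> p0 \<le> p"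
    using finite_pos_part[OF h(1)] ne unfolding p0_def by auto
  have q0: "q0 \<in> neg_part B" "\<And>q. q \<in> neg_part B \<Longrightarrow> q0 \<le> q"
    using finite_neg_part[OF h(1)] ne unfolding q0_def by auto
  have "p0 \<noteq> q0" using pos_neg_part_disjoint[OF h(1) h(3) p0(1)] q0(1) by auto
  hence "p0 < q0 \<or> q0 < p0" by auto
  thus ?thesis
  proof
    assume lt: "p0 < q0"
    have "pos_below_neg B" unfolding pos_below_neg_def
    proof (intro conjI ballI)
      show "mixed B" by fact
      fix p q assume pq: "p \<in> pos_part B" "q \<in> neg_part B"
      show "p < q"
      proof (rule ccontr)
        assume "\<not> p < q"
        moreover have "p \<noteq> q" using pos_neg_part_disjoint[OF h(1) h(3) pq(1)] pq(2) by auto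
        ultimately have "q < p" by simp
        thus False using no_neg_between_pos[OF h(1) h(3) p0(1) pq(1) pq(2)] lt q0(2)[OF pq(2)] by simp
      qed
    qed
    thus ?thesis by simp
  next
    assume lt: "q0 < p0"
    have "pos_below_neg (uminus ` B)" unfolding pos_below_neg_def
    proof (intro conjI ballI)
      show "mixed (uminus ` B)" using h(2) by simp
      fix p q assume pq: "p \<in> pos_part (uminus ` B)" "q \<in> neg_part (uminus ` B)"
      hence pq': "p \<in> neg_part B" "q \<in> pos_part B" by simp_all
      show "p < q"
      proof (rule ccontr)
        assume "\<not> p < q"
        moreover have "p \<noteq> q" using pos_neg_part_disjoint[OF h(1) h(3) pq'(2)] pq'(1) by auto
        ultimately have "q < p" by simp
        thus False using no_pos_between_neg[OF h(1) h(3) q0(1) pq'(1) pq'(2)] lt p0(2)[OF pq'(2)] by simp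
      qed
    qed
    thus ?thesis by simp
  qed
qed

lemma zero_blockI:
  assumes h: "B \<in> P" "pos_part B = neg_part B"
  shows "uminus ` B = B"
proof -
  have sub: "uminus ` B \<subseteq> B"
  proof
    fix x assume "x \<in> uminus ` B"
    then obtain k where k: "k \<in> B" "x = -k" by auto
    have "k \<noteq> 0" using block_elem[OF h(1) k(1)] by simp
    show "x \<in> B"
    proof (cases "k > 0")
      case True
      hence "k \<in> neg_part B" using k h(2) pos_partI[of k B] by simp
      thus ?thesis using k neg_partD by simp
    next
      case False hence "-k > 0" using \<open>k \<noteq> 0\<close> by simp
      hence "-k \<in> pos_part B" using k h(2) neg_partI[of "-k" B] by simp
      thus ?thesis using k pos_partD by simp
    qed
  qed
  hence "uminus ` uminus ` B \<subseteq> uminus ` B" by (rule image_mono)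
  thus ?thesis using sub by simp
qed

lemma Max_neg_part_antimono:
  assumes h: "B1 \<in> P" "B2 \<in> P" "mixed B1" "mixed B2" "Max (pos_part B1) < Max (pos_part B2)"
  shows "Max (neg_part B2) < Max (neg_part B1)"
proof (cases "B2 = uminus ` B1")
  case True thus ?thesis using h(5) by simp
next
  case False
  have ne: "pos_part B1 \<noteq> {}" "neg_part B1 \<noteq> {}" "pos_part B2 \<noteq> {}" "neg_part B2 \<noteq> {}"
    using h(3,4) by (auto simp: mixed_def)
  define p1 where "p1 = Max (pos_part B1)"
  define p2 where "p2 = Max (pos_part B2)"
  define q1 where "q1 = Max (neg_part B1)"
  define q2 where "q2 = Max (neg_part B2)"
  have m: "p1 \<in> pos_part B1" "p2 \<in> pos_part B2" "q1 \<in> neg_part B1" "q2 \<in> neg_part B2"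
    unfolding p1_def p2_def q1_def q2_def using ne finite_pos_part finite_neg_part h(1,2) by auto
  have "B1 \<noteq> B2" using h(5) by auto
  have "q1 \<noteq> q2"
  proof
    assume "q1 = q2"
    hence "-q1 \<in> B1" "-q1 \<in> B2" using m neg_partD by auto
    thus False using block_eq[OF h(1,2)] \<open>B1 \<noteq> B2\<close> by blast
  qed
  moreover have "\<not> q1 < q2"
  proof
    assume "q1 < q2"
    thus False
      using no_crossing_ppnn[OF h(1,2) \<open>B1 \<noteq> B2\<close>, of p1 "-q1" p2 "-q2"] m pos_partD neg_partD h(5)
      unfolding p1_def p2_def by auto
  qed
  ultimately show ?thesis unfolding q1_def q2_def by simp
qed

lemma Min_neg_part_le:
  assumes B0: "B0 \<in> P" "mixed B0" and B: "B \<in> P" "B \<noteq> B0"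
    and Max_le: "Max (neg_part B0) \<le> Max (neg_part B)" and q: "q \<in> neg_part B"
  shows "Min (neg_part B0) \<le> q"
proof -
  obtain a where a: "a \<in> pos_part B0" using B0(2) unfolding mixed_def by blast
  define b where "b = Min (neg_part B0)"
  define v where "v = Max (neg_part B)"
  have b: "b \<in> neg_part B0" "b \<le> Max (neg_part B0)"
    using B0 finite_neg_part[OF B0(1)] unfolding b_def mixed_def by auto
  have v: "v \<in> neg_part B" "b \<le> v"
    using q finite_neg_part[OF B(1)] Max_le b(2) unfolding v_def by (auto intro: Max_in)
  moreover have "b \<noteq> v"
    using neg_partD[OF v(1)] neg_partD[OF b(1)] block_eq[OF B(1) B0(1)] B(2) by auto
  moreover have signs: "0 < a" "0 < b" "0 < q" "0 < v"
    using pos_partD[OF a] neg_partD[OF b(1)] neg_partD[OF q] neg_partD[OF v(1)] by simp_all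
  ultimately show "Min (neg_part B0) \<le> q"
    unfolding b_def[symmetric]
  proof (intro leI notI)
    assume "q < b"
    show False
      by (rule no_crossing_pnnn[OF B0(1) B(1) not_sym[OF B(2)] conjunct1[OF pos_partD[OF a]]
            conjunct1[OF neg_partD[OF b(1)]] conjunct1[OF neg_partD[OF q]] conjunct1[OF neg_partD[OF v(1)]]])
        (use \<open>q < b\<close> \<open>b \<le> v\<close> \<open>b \<noteq> v\<close> signs in linarith)+
  qed
qed

lemma zero_block_inside:
  assumes h: "Z \<in> P" "uminus ` Z = Z" "B \<in> P" "pos_below_neg B" "c \<in> pos_part Z"
  shows "(\<forall>p\<in>pos_part B. p < c) \<and> (\<forall>q\<in>neg_part B. c < q)"
proof -
  have BZ: "B \<noteq> Z" using pos_below_neg_not_zero[OF h(4)] h(2) by auto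
  have cZ: "c \<in> Z" "-c \<in> Z" "0 < c"
    using h(5) zero_block_pos_eq_neg[OF h(2)] pos_partD neg_partD by auto
  obtain p0 q0 where pq0: "p0 \<in> pos_part B" "q0 \<in> neg_part B"
    using h(4) unfolding pos_below_neg_def mixed_def by auto
  have low: "\<And>p q. p \<in> pos_part B \<Longrightarrow> q \<in> neg_part B \<Longrightarrow> p < q"
    using h(4) unfolding pos_below_neg_def by auto
  have A: "\<forall>p\<in>pos_part B. p < c"
  proof
    fix p assume p: "p \<in> pos_part B"
    show "p < c"
    proof (rule ccontr)
      assume "\<not> p < c"
      moreover have "p \<noteq> c" using p cZ pos_partD block_eq[OF h(3) h(1)] BZ by blast
      ultimately have "c < p" by simp
      thus False
        using no_crossing_ppnn[OF h(1) h(3) BZ[symmetric], of c "-c" p "-q0"] cZ pos_partD[OF p] neg_partD[OF pq0(2)] low[OF p pq0(2)]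
        by auto
    qed
  qed
  have Bq: "\<And>q. q \<in> neg_part B \<Longrightarrow> q \<in> uminus ` B"
    using neg_part_subset by blast
  have "\<forall>q\<in>neg_part B. c < q"
  proof
    fix q assume q: "q \<in> neg_part B"
    have nB: "uminus ` B \<in> P" using uminus_block[OF h(3)] .
    have nBZ: "uminus ` B \<noteq> Z" using BZ h(2) by (metis uminus_image_uminus)
    show "c < q"
    proof (rule ccontr)
      assume "\<not> c < q"
      moreover have "q \<noteq> c" using Bq[OF q] cZ block_eq[OF nB h(1)] nBZ by blast
      ultimately have "q < c" by simp
      thus False
        using no_crossing_ppnn[OF nB h(1) nBZ, of q "-p0" c "-c"] Bq[OF q] cZ pos_partD[OF pq0(1)] neg_partD[OF q] A pq0(1)
        by auto
    qed
  qed
  thus ?thesis using A by simp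
qed

lemma zero_block_not_enclosed:
  assumes h: "Z \<in> P" "uminus ` Z = Z" "C \<in> P" "C \<noteq> Z" "u \<in> C" "v \<in> C" "0 < u" "u < c" "c < v" "c \<in> pos_part Z"
  shows "False"
proof -
  have cZ: "c \<in> Z" "-c \<in> Z" "0 < c"
    using h(10) zero_block_pos_eq_neg[OF h(2)] pos_partD neg_partD by auto
  show False using no_crossing_pppn[OF h(3) h(1) h(4), of u v c "-c"] h cZ by auto
qed

lemma normalized_representative:
  assumes "B \<in> P"
  obtains B' where "B' \<in> {B, uminus ` B}" "normalized B'"
proof -
  have "neg_part B = {} \<or> neg_part (uminus ` B) = {} \<or> pos_below_neg B \<or> pos_below_neg (uminus ` B)
        \<or> uminus ` B = B"
    using mixed_block_sorted[OF assms] unfolding mixed_def by auto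
  then show thesis
    using that unfolding normalized_def by (metis insertCI uminus_image_uminus)
qed

lemma zero_block_abs_hit:
  assumes h: "Z \<in> P" "uminus ` Z = Z" "C \<in> P" "k \<in> pos_part Z" "k \<in> abs ` C"
  shows "C = Z"
proof -
  have kz: "k \<in> Z" "-k \<in> Z"
    using h(4) zero_block_pos_eq_neg[OF h(2)] pos_partD neg_partD by auto
  have "k \<in> pos_part C \<or> k \<in> neg_part C"
    using abs_block[OF zero_notin_block[OF h(3)]] h(5) by auto
  hence "k \<in> C \<or> -k \<in> C" using pos_partD neg_partD by auto
  thus ?thesis using block_eq[OF h(3) h(1)] kz by blast
qed

lemma zero_block_mixed:
  assumes h: "B \<in> P" "uminus ` B = B"
  shows "mixed B"
proof -
  have "pos_part B = neg_part B" using zero_block_pos_eq_neg[OF h(2)] .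
  moreover have "abs ` B \<noteq> {}" using block_nonempty[OF h(1)] by simp
  ultimately show ?thesis using abs_block[OF zero_notin_block[OF h(1)]] unfolding mixed_def by simp
qed

lemma zero_block_pos_part: "Z \<in> P \<Longrightarrow> uminus ` Z = Z \<Longrightarrow> pos_part Z \<noteq> {} \<and> finite (pos_part Z)"
  using zero_block_mixed finite_pos_part unfolding mixed_def by blast

lemma zero_block_not_straddled:
  assumes h: "Z \<in> P" "uminus ` Z = Z" "C \<in> P" "u \<in> C" "v \<in> C" "0 < u" "u < Min (pos_part Z)" "Max (pos_part Z) < v"
  shows "False"
proof -
  have ne: "pos_part Z \<noteq> {}" "finite (pos_part Z)"
    using zero_block_pos_part[OF h(1,2)] by auto
  have mi: "Min (pos_part Z) \<in> pos_part Z" "Min (pos_part Z) \<le> Max (pos_part Z)"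
    using ne by auto
  show False
  proof (cases "C = Z")
    case True
    hence "u \<in> pos_part Z" using h(4,6) pos_partI by simp
    hence "Min (pos_part Z) \<le> u" using ne by simp
    thus False using h(7) by simp
  next
    case False
    show False using zero_block_not_enclosed[OF h(1,2,3) False h(4,5,6) h(7), of ] mi h(8) by simp
  qed
qed

lemma abs_zero_block: "Z \<in> P \<Longrightarrow> uminus ` Z = Z \<Longrightarrow> abs ` Z = pos_part Z"
  using abs_block[OF zero_notin_block] zero_block_pos_eq_neg by simp
end

text \<open>
  The edge (a, b) produced by \<open>\<psi>\<close> for even m: a is in the positive part and b in the negative
  part of the innermost block whose positive part lies below its negative part.
\<close>

definition central_pair :: "int set set \<Rightarrow> int \<Rightarrow> int \<Rightarrow> bool" where
  "central_pair P a b \<longleftrightarrow> (\<exists>B0\<in>P. pos_below_neg B0 \<and> a \<in> pos_part B0 \<and> b \<in> neg_part B0)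
     \<and> (\<forall>B\<in>P. pos_below_neg B \<longrightarrow> (\<forall>p\<in>pos_part B. p \<le> a) \<and> (\<forall>q\<in>neg_part B. b \<le> q))
     \<and> (\<forall>Z\<in>P. uminus ` Z \<noteq> Z)"

context ncb_partition begin

lemma central_pair_not_enclosed:
  assumes h: "central_pair P a b" "C \<in> P" "u \<in> C" "v \<in> C" "0 < u" "u \<le> a" "b \<le> v"
  shows "False"
proof -
  obtain B0 where B0: "B0 \<in> P" "pos_below_neg B0" "a \<in> pos_part B0" "b \<in> neg_part B0"
    using h(1) unfolding central_pair_def by blast
  have ab: "a < b" using B0 unfolding pos_below_neg_def by auto
  have aB: "a \<in> B0" "-b \<in> B0" using B0 pos_partD neg_partD by auto
  show False
  proof (cases "C = B0")
    case True
    hence "v \<in> pos_part B0" using h ab pos_partI[of v B0] by simp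
    hence "v \<le> a" using h(1) B0 unfolding central_pair_def by auto
    thus False using ab h by simp
  next
    case False
    have "u \<noteq> a" using block_eq[OF h(2) B0(1)] False h(3) aB by blast
    thus False using no_crossing_pppn[OF h(2) B0(1) False, of u v a "-b"] h ab aB by auto
  qed
qed

lemma pure_block_central_pair:
  assumes h: "central_pair P i j" "B \<in> P" "neg_part B = {}" "u \<in> B" "v \<in> B" "0 < u" "u < v"
  shows "v < i \<or> j < u \<or> (i < u \<and> v < j)"
proof (rule ccontr)
  assume nh: "\<not> (v < i \<or> j < u \<or> (i < u \<and> v < j))"
  obtain B0 where B0: "B0 \<in> P" "pos_below_neg B0" "i \<in> pos_part B0" "j \<in> neg_part B0"
    using h(1) unfolding central_pair_def by blast
  have ij: "i < j" using B0 unfolding pos_below_neg_def by auto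
  have iB: "i \<in> B0" "-j \<in> B0" "j \<in> uminus ` B0" "-i \<in> uminus ` B0"
    using B0 pos_partD neg_partD mem_uminus_imageI by auto
  have nB0: "uminus ` B0 \<in> P" using uminus_block[OF B0(1)] .
  have mB0: "neg_part B0 \<noteq> {}" "pos_part B0 \<noteq> {}" using B0 by auto
  have d1: "B \<noteq> B0" using h(3) mB0 by auto
  have d2: "B \<noteq> uminus ` B0" using h(3) mB0 by auto
  have ne: "u \<noteq> i" "v \<noteq> i" using block_eq[OF h(2) B0(1)] d1 h(4,5) iB by blast+
  have ne2: "u \<noteq> j" "v \<noteq> j" using block_eq[OF h(2) nB0] d2 h(4,5) iB by blast+
  show False
  proof (cases "u < i")
    case True
    show False
    proof (cases "v < j")
      case True
      thus False using no_crossing_pppn[OF h(2) B0(1) d1, of u v i "-j"] h \<open>u < i\<close> nh iB ne ij by auto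
    next
      case False
      thus False using central_pair_not_enclosed[OF h(1) h(2) h(4) h(5) h(6)] \<open>u < i\<close> ne2 by auto
    qed
  next
    case False
    hence "i < u" using ne by simp
    hence "j < v" using nh ne2 by auto
    thus False
      using no_crossing_pppn[OF h(2) nB0 d2, of u v j "-i"] h \<open>i < u\<close> nh iB ij ne2 pos_partD[OF B0(3)] by auto
  qed
qed

lemma central_pair_bounds: "central_pair P a b \<Longrightarrow> B \<in> P \<Longrightarrow> pos_below_neg B \<Longrightarrow> (\<forall>p\<in>pos_part B. p \<le> a) \<and> (\<forall>q\<in>neg_part B. b \<le> q)"
  unfolding central_pair_def by blast

lemma central_pair_no_zero: "central_pair P a b \<Longrightarrow> B \<in> P \<Longrightarrow> uminus ` B \<noteq> B"
  unfolding central_pair_def by blast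

lemma central_pair_less: "central_pair P a b \<Longrightarrow> a < b"
  unfolding central_pair_def pos_below_neg_def by blast

lemma central_pair_edge:
  assumes h: "central_pair P a b"
  shows "is_edge ((\<lambda>B. abs ` B) ` P) a b"
proof -
  obtain B0 where B0: "B0 \<in> P" "pos_below_neg B0" "a \<in> pos_part B0" "b \<in> neg_part B0"
    using h unfolding central_pair_def by blast
  have bd: "\<forall>p\<in>pos_part B0. p \<le> a" "\<forall>q\<in>neg_part B0. b \<le> q"
    using central_pair_bounds[OF h B0(1,2)] by auto
  have "a \<in> abs ` B0" "b \<in> abs ` B0"
    using abs_block[OF zero_notin_block[OF B0(1)]] B0 by auto
  moreover have "\<forall>k\<in>abs ` B0. \<not> (a < k \<and> k < b)"
  proof
    fix k assume "k \<in> abs ` B0"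
    hence "k \<in> pos_part B0 \<or> k \<in> neg_part B0"
      using abs_block[OF zero_notin_block[OF B0(1)]] by simp
    thus "\<not> (a < k \<and> k < b)" using bd by auto
  qed
  moreover have "a < b" using central_pair_less[OF h] .
  ultimately show ?thesis unfolding is_edge_def using B0(1) by blast
qed

lemma mixed_edge_central_pair:
  assumes h: "central_pair P i j" "B \<in> P" "mixed B" "i' \<in> abs ` B" "j' \<in> abs ` B"
  shows "j' \<le> i \<or> j \<le> i' \<or> (i' \<le> i \<and> j \<le> j')"
proof -
  have "pos_below_neg B \<or> pos_below_neg (uminus ` B)"
    using mixed_block_sorted[OF h(2,3) central_pair_no_zero[OF h(1) h(2)]] .
  then obtain B' where B': "B' \<in> P" "pos_below_neg B'" "abs ` B' = abs ` B"
    using h(2) uminus_block by (metis abs_image_uminus)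
  have bd: "\<forall>k\<in>pos_part B'. k \<le> i" "\<forall>k\<in>neg_part B'. j \<le> k"
    using central_pair_bounds[OF h(1) B'(1,2)] by auto
  have e: "abs ` B = pos_part B' \<union> neg_part B'"
    using abs_block[OF zero_notin_block[OF B'(1)]] B'(3) by simp
  have "i' \<in> pos_part B' \<or> i' \<in> neg_part B'" "j' \<in> pos_part B' \<or> j' \<in> neg_part B'"
    using h(4,5) e by auto
  thus ?thesis using bd by blast
qed

subsection \<open>The map \<open>\<psi>\<close>\<close>

text \<open>
  The data in the definition of \<open>\<psi>\<close>: \<open>eta\<close> and \<open>Xs\<close> are \<open>\<eta>\<close> and X, \<open>num_mixed\<close> is m and
  \<open>A_of Xs i\<close> is A_i. Every A \<in> X is the positive part of a mixed block, \<open>partner A\<close> is the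
  negative part of that block, and A = A_(rank A + 1).
\<close>

definition eta :: "int set set" where
  "eta = {B \<inter> {1..int n} | B. B \<in> P} - {{}}"

definition Xs :: "int set set" where
  "Xs = {A \<in> eta. \<exists>B\<in>P. A \<subseteq> B \<and> (\<exists>k\<in>B. k < 0)}"

definition num_mixed :: nat where
  "num_mixed = card Xs"

definition block_of :: "int set \<Rightarrow> int set" where
  "block_of A = (THE B. B \<in> P \<and> pos_part B = A)"

definition partner :: "int set \<Rightarrow> int set" where
  "partner A = neg_part (block_of A)"

definition rank :: "int set \<Rightarrow> nat" where
  "rank A = card {A'\<in>Xs. Max A' < Max A}"

definition lower_half :: "int set set" where
  "lower_half = {A_of Xs i | i. 1 \<le> i \<and> i \<le> num_mixed div 2}"

definition upper_half :: "int set set" where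
  "upper_half = {A_of Xs (num_mixed + 1 - i) | i. 1 \<le> i \<and> i \<le> num_mixed div 2}"

definition merged :: "int set set" where
  "merged = {A_of Xs i \<union> A_of Xs (num_mixed + 1 - i) | i. 1 \<le> i \<and> i \<le> num_mixed div 2}"

lemma psi_unfold: "psi n P = ((eta - lower_half - upper_half) \<union> merged,
   (if num_mixed = 0 then XEmpty
    else if even num_mixed then XEdge (Max (A_of Xs (num_mixed div 2))) (Min (A_of Xs (num_mixed div 2 + 1)))
    else XBlock (A_of Xs ((num_mixed + 1) div 2))))"
  unfolding psi_def Let_def eta_def Xs_def num_mixed_def lower_half_def upper_half_def merged_def
  by (rule refl)

lemma block_inter_pos: "B \<in> P \<Longrightarrow> B \<inter> {1..int n} = pos_part B"
  using block_elem unfolding pos_part_def by force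

lemma pos_part_inj:
  assumes h: "B \<in> P" "C \<in> P" "pos_part B = pos_part C" "pos_part B \<noteq> {}"
  shows "B = C"
proof -
  from h obtain k where "k \<in> pos_part B" by auto
  hence "k \<in> B" "k \<in> C" using h(3) pos_partD by auto
  thus ?thesis using block_eq[OF h(1,2)] by simp
qed

lemma eta_eq: "eta = {pos_part B | B. B \<in> P \<and> pos_part B \<noteq> {}}"
  unfolding eta_def
proof (intro set_eqI iffI)
  fix A assume "A \<in> {B \<inter> {1..int n} |B. B \<in> P} - {{}}"
  then obtain B where "B \<in> P" "A = B \<inter> {1..int n}" "A \<noteq> {}" by auto
  thus "A \<in> {pos_part B |B. B \<in> P \<and> pos_part B \<noteq> {}}"
    using block_inter_pos by auto
next
  fix A assume "A \<in> {pos_part B |B. B \<in> P \<and> pos_part B \<noteq> {}}"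
  then obtain B where "B \<in> P" "A = pos_part B" "A \<noteq> {}" by auto
  thus "A \<in> {B \<inter> {1..int n} |B. B \<in> P} - {{}}" using block_inter_pos[of B] by auto
qed

lemma Xs_eq: "Xs = {pos_part B | B. B \<in> P \<and> mixed B}"
proof
  show "Xs \<subseteq> {pos_part B | B. B \<in> P \<and> mixed B}"
  proof
    fix A assume "A \<in> Xs"
    then obtain B B' k where h: "B \<in> P" "A = pos_part B" "pos_part B \<noteq> {}" "B' \<in> P" "A \<subseteq> B'" "k \<in> B'" "k < 0"
      unfolding Xs_def eta_eq by blast
    obtain p where p: "p \<in> pos_part B" using h(3) by auto
    have "B = B'" using block_eq[OF h(1) h(4), of p] p h(2,5) pos_partD by auto
    hence "-k \<in> neg_part B" using h neg_partI[of "-k" B] by simp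
    hence "mixed B" using h(3) by (auto simp: mixed_def)
    thus "A \<in> {pos_part B | B. B \<in> P \<and> mixed B}" using h by auto
  qed
  show "{pos_part B | B. B \<in> P \<and> mixed B} \<subseteq> Xs"
  proof
    fix A assume "A \<in> {pos_part B | B. B \<in> P \<and> mixed B}"
    then obtain B where h: "B \<in> P" "mixed B" "A = pos_part B" by auto
    obtain q where q: "q \<in> neg_part B" using h(2) by (auto simp: mixed_def)
    have "A \<in> eta" using h unfolding eta_eq mixed_def by auto
    moreover have "A \<subseteq> B" using h(3) by (auto simp: pos_part_def)
    moreover have "-q \<in> B" "-q < 0" using neg_partD[OF q] by auto
    ultimately show "A \<in> Xs" unfolding Xs_def using h(1) by blast
  qed
qed

lemma XsI: "B \<in> P \<Longrightarrow> mixed B \<Longrightarrow> pos_part B \<in> Xs"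
  unfolding Xs_eq by auto

lemma XsE: "A \<in> Xs \<Longrightarrow> (\<And>B. B \<in> P \<Longrightarrow> mixed B \<Longrightarrow> A = pos_part B \<Longrightarrow> thesis) \<Longrightarrow> thesis"
  unfolding Xs_eq by auto

lemma block_of_pos_part: "B \<in> P \<Longrightarrow> pos_part B \<noteq> {} \<Longrightarrow> block_of (pos_part B) = B"
  unfolding block_of_def by (rule the_equality) (use pos_part_inj in auto)

lemma partner_pos_part: "B \<in> P \<Longrightarrow> mixed B \<Longrightarrow> partner (pos_part B) = neg_part B"
  unfolding partner_def using block_of_pos_part by (simp add: mixed_def)

lemma finite_Xs: "finite Xs"
proof -
  have "Xs \<subseteq> pos_part ` P" unfolding Xs_eq by auto
  thus ?thesis using finite_partition finite_subset by blast
qed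

lemma partner_in_Xs: "A \<in> Xs \<Longrightarrow> partner A \<in> Xs"
proof (erule XsE)
  fix B assume h: "B \<in> P" "mixed B" "A = pos_part B"
  have "partner A = pos_part (uminus ` B)" using partner_pos_part[OF h(1,2)] h(3) by simp
  thus "partner A \<in> Xs" using XsI[OF uminus_block[OF h(1)]] h(2) by simp
qed

lemma partner_partner: "A \<in> Xs \<Longrightarrow> partner (partner A) = A"
proof (erule XsE)
  fix B assume h: "B \<in> P" "mixed B" "A = pos_part B"
  have "partner A = pos_part (uminus ` B)" using partner_pos_part[OF h(1,2)] h(3) by simp
  hence "partner (partner A) = neg_part (uminus ` B)"
    using partner_pos_part[OF uminus_block[OF h(1)]] h(2) by simp
  thus "partner (partner A) = A" using h(3) by simp
qed

lemma Xs_nonempty: "A \<in> Xs \<Longrightarrow> A \<noteq> {} \<and> finite A"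
  by (erule XsE) (auto simp: mixed_def finite_pos_part)

lemma inj_on_Max_Xs: "inj_on Max Xs"
proof (rule inj_onI)
  fix A A' assume h: "A \<in> Xs" "A' \<in> Xs" "Max A = Max A'"
  obtain B where B: "B \<in> P" "mixed B" "A = pos_part B" using h(1) by (rule XsE) auto
  obtain B' where B': "B' \<in> P" "mixed B'" "A' = pos_part B'" using h(2) by (rule XsE) auto
  have "Max A \<in> A" "Max A' \<in> A'"
    using Xs_nonempty[OF h(1)] Xs_nonempty[OF h(2)] Max_in by auto
  hence "Max A \<in> A" "Max A \<in> A'" using h(3) by simp_all
  hence "Max A \<in> B" "Max A \<in> B'" using B B' pos_partD by auto
  hence "B = B'" using block_eq[OF B(1) B'(1)] by simp
  thus "A = A'" using B B' by simp
qed

lemma Max_partner_antimono: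
  assumes h: "A \<in> Xs" "A' \<in> Xs" "Max A < Max A'"
  shows "Max (partner A') < Max (partner A)"
proof -
  obtain B where B: "B \<in> P" "mixed B" "A = pos_part B" using h(1) by (rule XsE) auto
  obtain B' where B': "B' \<in> P" "mixed B'" "A' = pos_part B'" using h(2) by (rule XsE) auto
  show ?thesis using Max_neg_part_antimono[OF B(1) B'(1) B(2) B'(2)] h(3) B B' partner_pos_part by simp
qed

lemma rank_partner: "A \<in> Xs \<Longrightarrow> rank (partner A) = num_mixed - 1 - rank A"
  unfolding rank_def num_mixed_def
  by (rule card_less_involution[OF finite_Xs inj_on_Max_Xs partner_in_Xs partner_partner Max_partner_antimono])

lemma rank_less:
  assumes h: "A \<in> Xs"
  shows "rank A < num_mixed"
proof -
  have "{A'\<in>Xs. Max A' < Max A} \<subset> Xs" using h by auto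
  thus ?thesis unfolding rank_def num_mixed_def using finite_Xs psubset_card_mono by blast
qed

lemma rank_strict_mono:
  assumes h: "A \<in> Xs" "A' \<in> Xs" "Max A < Max A'"
  shows "rank A < rank A'"
proof -
  have "{B\<in>Xs. Max B < Max A} \<subset> {B\<in>Xs. Max B < Max A'}" using h by auto
  thus ?thesis unfolding rank_def using finite_Xs psubset_card_mono
    by (metis (no_types, lifting) finite_subset mem_Collect_eq subsetI)
qed

lemma rank_le_iff:
  assumes h: "A \<in> Xs" "A' \<in> Xs"
  shows "rank A \<le> rank A' \<longleftrightarrow> Max A \<le> Max A'"
proof
  assume "rank A \<le> rank A'"
  thus "Max A \<le> Max A'"
    using rank_strict_mono[OF h(2) h(1)] by (meson leD linorder_le_less_linear)
next
  assume "Max A \<le> Max A'"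
  hence "Max A < Max A' \<or> Max A = Max A'" by auto
  thus "rank A \<le> rank A'"
  proof
    assume "Max A < Max A'" thus ?thesis using rank_strict_mono[OF h] by simp
  next
    assume "Max A = Max A'" hence "A = A'" using inj_on_Max_Xs h by (simp add: inj_on_def)
    thus ?thesis by simp
  qed
qed

lemma inj_on_rank: "inj_on rank Xs"
proof (rule inj_onI)
  fix A A' assume h: "A \<in> Xs" "A' \<in> Xs" "rank A = rank A'"
  hence "Max A \<le> Max A'" "Max A' \<le> Max A"
    using rank_le_iff[OF h(1,2)] rank_le_iff[OF h(2,1)] by simp_all
  hence "Max A = Max A'" by simp
  thus "A = A'" using inj_on_Max_Xs h by (simp add: inj_on_def)
qed

lemma rank_image: "rank ` Xs = {..<num_mixed}"
proof -
  have "rank ` Xs \<subseteq> {..<num_mixed}" using rank_less by auto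
  moreover have "card (rank ` Xs) = num_mixed"
    unfolding num_mixed_def using card_image[OF inj_on_rank] .
  ultimately show ?thesis by (simp add: card_subset_eq)
qed

lemma A_of_rank:
  assumes h: "A \<in> Xs"
  shows "A_of Xs (rank A + 1) = A"
proof -
  have c: "card {t \<in> Max ` Xs. t < Max A} = rank A"
  proof -
    have "{t \<in> Max ` Xs. t < Max A} = Max ` {A'\<in>Xs. Max A' < Max A}" by auto
    moreover have "inj_on Max {A'\<in>Xs. Max A' < Max A}"
      using inj_on_Max_Xs inj_on_subset by fastforce
    ultimately show ?thesis unfolding rank_def by (simp add: card_image)
  qed
  have "sorted_list_of_set (Max ` Xs) ! rank A = Max A"
    using sorted_list_of_set_nth_card_less[of "Max ` Xs" "Max A"] c finite_Xs h by simp
  thus ?thesis unfolding A_of_def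
    by (intro the_equality) (use h inj_on_Max_Xs in \<open>auto simp: inj_on_def\<close>)
qed

lemma A_of_exists:
  assumes h: "1 \<le> i" "i \<le> num_mixed"
  shows "\<exists>A\<in>Xs. rank A = i - 1 \<and> A_of Xs i = A"
proof -
  have "i - 1 \<in> rank ` Xs" using rank_image h by auto
  then obtain A where A: "A \<in> Xs" "rank A = i - 1" by auto
  have "A_of Xs i = A" using A_of_rank[OF A(1)] A(2) h(1) by simp
  thus ?thesis using A by blast
qed

lemma A_of_reflect:
  assumes h: "1 \<le> i" "i \<le> num_mixed"
  shows "A_of Xs (num_mixed + 1 - i) = partner (A_of Xs i)"
proof -
  obtain A where A: "A \<in> Xs" "rank A = i - 1" "A_of Xs i = A" using A_of_exists[OF h] by blast
  have "rank (partner A) + 1 = num_mixed + 1 - i" using rank_partner[OF A(1)] A(2) h by simp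
  thus ?thesis using A_of_rank[OF partner_in_Xs[OF A(1)]] A(3) by simp
qed

lemma lower_half_iff: "A \<in> lower_half \<longleftrightarrow> A \<in> Xs \<and> rank A < num_mixed div 2"
proof
  assume "A \<in> lower_half"
  then obtain i where i: "1 \<le> i" "i \<le> num_mixed div 2" "A = A_of Xs i"
    unfolding lower_half_def by auto
  then obtain A' where "A' \<in> Xs" "rank A' = i - 1" "A_of Xs i = A'"
    using A_of_exists[of i] by (metis div_le_dividend order_trans)
  then show "A \<in> Xs \<and> rank A < num_mixed div 2"
    using i by auto
next
  assume A: "A \<in> Xs \<and> rank A < num_mixed div 2"
  then have "A = A_of Xs (rank A + 1)" "1 \<le> rank A + 1" "rank A + 1 \<le> num_mixed div 2"
    using A_of_rank by auto
  then show "A \<in> lower_half"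
    unfolding lower_half_def by blast
qed

lemma A_of_in_Xs: "1 \<le> i \<Longrightarrow> i \<le> num_mixed \<Longrightarrow> A_of Xs i \<in> Xs"
  using A_of_exists by blast

lemma halves_subset_Xs: "lower_half \<subseteq> Xs" "upper_half \<subseteq> Xs"
  unfolding lower_half_def upper_half_def using A_of_in_Xs by auto

lemma upper_half_iff_partner:
  assumes A: "A \<in> Xs"
  shows "A \<in> upper_half \<longleftrightarrow> partner A \<in> lower_half"
proof
  assume "A \<in> upper_half"
  then obtain i where i: "1 \<le> i" "i \<le> num_mixed div 2" "A = A_of Xs (num_mixed + 1 - i)"
    unfolding upper_half_def by auto
  then have "i \<le> num_mixed" by simp
  with i have "partner A = A_of Xs i"
    using A_of_reflect partner_partner A_of_in_Xs by simp
  with i show "partner A \<in> lower_half"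
    unfolding lower_half_def by blast
next
  assume "partner A \<in> lower_half"
  then obtain i where i: "1 \<le> i" "i \<le> num_mixed div 2" "partner A = A_of Xs i"
    unfolding lower_half_def by auto
  then have "i \<le> num_mixed" by simp
  with i have "A = A_of Xs (num_mixed + 1 - i)"
    using A_of_reflect partner_partner[OF A] by simp
  with i show "A \<in> upper_half"
    unfolding upper_half_def by blast
qed

lemma merged_iff: "D \<in> merged \<longleftrightarrow> (\<exists>A\<in>lower_half. D = A \<union> partner A)"
proof -
  have "A_of Xs (num_mixed + 1 - i) = partner (A_of Xs i)" if "i \<le> num_mixed div 2" "1 \<le> i" for i
    using that A_of_reflect by simp
  then show ?thesis
    unfolding merged_def lower_half_def by auto
qed

lemma self_partner_iff:
  assumes A: "A \<in> Xs"
  shows "partner A = A \<longleftrightarrow> A \<notin> lower_half \<and> A \<notin> upper_half"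
proof -
  have rank_partner_A: "rank (partner A) = num_mixed - 1 - rank A" "rank A < num_mixed"
    using rank_partner[OF A] rank_less[OF A] by simp_all
  have "partner A = A \<longleftrightarrow> rank (partner A) = rank A"
    using inj_on_rank partner_in_Xs[OF A] A by (auto simp: inj_on_def)
  also have "\<dots> \<longleftrightarrow> \<not> rank A < num_mixed div 2 \<and> \<not> rank (partner A) < num_mixed div 2"
    using rank_partner_A by (cases "even num_mixed") (auto elim!: evenE oddE)
  finally show ?thesis
    using A partner_in_Xs[OF A] lower_half_iff upper_half_iff_partner by blast
qed

lemma pure_block_kept:
  assumes B: "B \<in> P" "neg_part B = {}"
  shows "abs ` B \<in> eta - lower_half - upper_half"
proof -
  have abs_B: "abs ` B = pos_part B"
    using abs_block[OF zero_notin_block[OF B(1)]] B(2) by simp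
  then have ne: "pos_part B \<noteq> {}"
    using block_nonempty[OF B(1)] by auto
  have "pos_part B \<notin> Xs"
  proof
    assume "pos_part B \<in> Xs"
    then obtain B' where B': "B' \<in> P" "mixed B'" "pos_part B = pos_part B'" by (rule XsE) auto
    then have "B = B'" using pos_part_inj[OF B(1) B'(1)] ne by simp
    then show False using B B' by (simp add: mixed_def)
  qed
  moreover have "pos_part B \<in> eta" using B(1) ne unfolding eta_eq by auto
  ultimately show ?thesis
    using abs_B halves_subset_Xs by auto
qed

lemma fst_psi_subset: "fst (psi n P) \<subseteq> (\<lambda>B. abs ` B) ` P"
proof
  fix D assume "D \<in> fst (psi n P)"
  then consider "D \<in> eta - lower_half - upper_half" | "D \<in> merged"
    unfolding psi_unfold by auto
  then show "D \<in> (\<lambda>B. abs ` B) ` P"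
  proof cases
    case 1
    then obtain B where B: "B \<in> P" "D = pos_part B" "pos_part B \<noteq> {}"
      unfolding eta_eq by auto
    have "neg_part B = pos_part B" if mB: "mixed B"
    proof -
      have "D \<in> Xs" using XsI[OF B(1) mB] B by simp
      then have "partner D = D" using 1 self_partner_iff by blast
      then show ?thesis using partner_pos_part[OF B(1) mB] B by simp
    qed
    then have "D = abs ` B"
      using B abs_block[OF zero_notin_block[OF B(1)]] by (auto simp: mixed_def)
    then show ?thesis using B(1) by blast
  next
    case 2
    then obtain A where A: "A \<in> Xs" "D = A \<union> partner A"
      using merged_iff lower_half_iff by auto
    obtain B where B: "B \<in> P" "mixed B" "A = pos_part B" using A(1) by (rule XsE) auto
    have "D = abs ` B"
      using A B partner_pos_part[OF B(1,2)] abs_block[OF zero_notin_block[OF B(1)]] by simp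
    then show ?thesis using B by auto
  qed
qed

lemma abs_block_in_fst_psi:
  assumes B: "B \<in> P"
  shows "abs ` B \<in> fst (psi n P)"
proof -
  have abs_B: "abs ` B = pos_part B \<union> neg_part B"
    using abs_block[OF zero_notin_block[OF B]] .
  have "abs ` B \<in> eta - lower_half - upper_half \<or> abs ` B \<in> merged"
  proof (cases "mixed B")
    case False
    then have "neg_part B = {} \<or> neg_part (uminus ` B) = {}"
      by (auto simp: mixed_def)
    then show ?thesis
      using pure_block_kept[OF B] pure_block_kept[OF uminus_block[OF B]] by auto
  next
    case True
    have A: "pos_part B \<in> Xs" and partner_A: "partner (pos_part B) = neg_part B"
      using XsI[OF B True] partner_pos_part[OF B True] .
    consider "pos_part B \<in> lower_half" | "pos_part B \<in> upper_half" | "partner (pos_part B) = pos_part B"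
      using self_partner_iff[OF A] by blast
    then show ?thesis
    proof cases
      case 1
      then have "abs ` B \<in> merged"
        unfolding merged_iff abs_B partner_A[symmetric] by blast
      then show ?thesis ..
    next
      case 2
      then have "neg_part B \<in> lower_half"
        using upper_half_iff_partner[OF A] partner_A by simp
      moreover have "partner (neg_part B) = pos_part B"
        using partner_partner[OF A] partner_A by simp
      ultimately have "abs ` B \<in> merged"
        unfolding merged_iff abs_B by (metis sup_commute)
      then show ?thesis ..
    next
      case 3
      then have "pos_part B \<notin> lower_half" "pos_part B \<notin> upper_half"
        using self_partner_iff[OF A] by blast+
      moreover have "abs ` B = pos_part B"
        using 3 abs_B partner_A by simp
      moreover have "pos_part B \<in> eta" using A unfolding Xs_def by simp
      ultimately show ?thesis by simp
    qed
  qed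
  then show ?thesis unfolding psi_unfold by auto
qed

lemma fst_psi: "fst (psi n P) = (\<lambda>B. abs ` B) ` P"
  using fst_psi_subset abs_block_in_fst_psi by blast

lemma snd_psi: "snd (psi n P) = (if num_mixed = 0 then XEmpty
    else if even num_mixed then XEdge (Max (A_of Xs (num_mixed div 2))) (Min (A_of Xs (num_mixed div 2 + 1)))
    else XBlock (A_of Xs ((num_mixed + 1) div 2)))"
  by (subst psi_unfold, rule snd_conv)

lemma snd_psi_block:
  assumes h: "snd (psi n P) = XBlock C"
  shows "\<exists>Z\<in>P. uminus ` Z = Z \<and> C = pos_part Z"
proof -
  have m: "num_mixed \<noteq> 0" "odd num_mixed" "C = A_of Xs ((num_mixed + 1) div 2)"
    using h unfolding snd_psi by (auto split: if_splits)
  have m1: "1 \<le> (num_mixed + 1) div 2" "(num_mixed + 1) div 2 \<le> num_mixed"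
    using m(1,2) by (cases "even num_mixed"; auto elim!: evenE oddE)+
  obtain A where A: "A \<in> Xs" "rank A = (num_mixed + 1) div 2 - 1" "A_of Xs ((num_mixed + 1) div 2) = A"
    using A_of_exists[OF m1] by blast
  have "rank (partner A) = rank A"
    using rank_partner[OF A(1)] A(2) m(1,2) by (cases "even num_mixed") (auto elim!: evenE oddE)
  hence fA: "partner A = A" using inj_on_rank partner_in_Xs[OF A(1)] A(1) by (simp add: inj_on_def)
  obtain B where B: "B \<in> P" "mixed B" "A = pos_part B" using A(1) by (rule XsE) auto
  have "neg_part B = pos_part B" using partner_pos_part[OF B(1,2)] fA B by simp
  hence "uminus ` B = B" using zero_blockI[OF B(1)] by simp
  thus ?thesis using B A m by auto
qed

lemma self_partner_odd: "A \<in> Xs \<Longrightarrow> partner A = A \<Longrightarrow> odd num_mixed"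
  using rank_partner[of A] rank_less[of A] by presburger

lemma zero_block_self_partner:
  assumes "Z \<in> P" "uminus ` Z = Z"
  shows "pos_part Z \<in> Xs" "partner (pos_part Z) = pos_part Z"
proof -
  have "mixed Z" using zero_block_mixed assms .
  then show "pos_part Z \<in> Xs" "partner (pos_part Z) = pos_part Z"
    using XsI partner_pos_part zero_block_pos_eq_neg[OF assms(2)] assms(1) by metis+
qed

lemma pos_below_neg_iff_lower_half:
  assumes B: "B \<in> P" "mixed B"
  shows "pos_below_neg B \<longleftrightarrow> pos_part B \<in> lower_half"
proof -
  have A: "pos_part B \<in> Xs" "neg_part B \<in> Xs"
    using XsI[OF B] partner_in_Xs[OF XsI[OF B]] partner_pos_part[OF B] by auto
  have rank_neg: "rank (neg_part B) = num_mixed - 1 - rank (pos_part B)" "rank (pos_part B) < num_mixed"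
    using rank_partner[OF A(1)] partner_pos_part[OF B] rank_less[OF A(1)] by simp_all
  have ne: "pos_part B \<noteq> {}" "neg_part B \<noteq> {}" "finite (pos_part B)" "finite (neg_part B)"
    using B finite_pos_part finite_neg_part by (auto simp: mixed_def)
  have "pos_below_neg B \<longleftrightarrow> Max (pos_part B) < Max (neg_part B)"
  proof
    assume "pos_below_neg B"
    then show "Max (pos_part B) < Max (neg_part B)"
      using ne unfolding pos_below_neg_def by simp
  next
    assume less: "Max (pos_part B) < Max (neg_part B)"
    then have "uminus ` B \<noteq> B"
      using zero_block_pos_eq_neg by force
    moreover have "\<not> pos_below_neg (uminus ` B)"
      using less ne unfolding pos_below_neg_def by (metis Max_in neg_part_uminus pos_part_uminus order.asym)
    ultimately show "pos_below_neg B"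
      using mixed_block_sorted[OF B] by blast
  qed
  also have "\<dots> \<longleftrightarrow> rank (pos_part B) < rank (neg_part B)"
    using rank_le_iff[OF A(2) A(1)] by (simp add: not_le[symmetric])
  also have "\<dots> \<longleftrightarrow> rank (pos_part B) < num_mixed div 2"
    using rank_neg by (cases "even num_mixed") (auto elim!: evenE oddE)
  finally show ?thesis
    using A(1) lower_half_iff by blast
qed

lemma even_num_mixed_no_zero_block: "even num_mixed \<Longrightarrow> Z \<in> P \<Longrightarrow> uminus ` Z \<noteq> Z"
  using self_partner_odd zero_block_self_partner by blast

lemma pos_below_neg_ranks:
  assumes "B \<in> P" "pos_below_neg B"
  shows "pos_part B \<in> Xs" "neg_part B \<in> Xs" "rank (pos_part B) < num_mixed div 2"
    "rank (neg_part B) = num_mixed - 1 - rank (pos_part B)"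
proof -
  have mB: "mixed B" using assms(2) by (rule pos_below_neg_mixed)
  show XB: "pos_part B \<in> Xs" "neg_part B \<in> Xs"
    using XsI[OF assms(1) mB] partner_in_Xs[OF XsI[OF assms(1) mB]] partner_pos_part[OF assms(1) mB] by auto
  show "rank (pos_part B) < num_mixed div 2"
    using pos_below_neg_iff_lower_half[OF assms(1) mB] assms(2) lower_half_iff by blast
  show "rank (neg_part B) = num_mixed - 1 - rank (pos_part B)"
    using rank_partner[OF XB(1)] partner_pos_part[OF assms(1) mB] by simp
qed

lemma snd_psi_edge:
  assumes "snd (psi n P) = XEdge a b"
  shows "central_pair P a b"
proof -
  from assms have m: "num_mixed \<noteq> 0" "even num_mixed"
    and ab: "a = Max (A_of Xs (num_mixed div 2))" "b = Min (A_of Xs (num_mixed div 2 + 1))"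
    unfolding snd_psi by (auto split: if_splits)
  have m1: "1 \<le> num_mixed div 2" "num_mixed div 2 \<le> num_mixed"
    using m by (auto elim!: evenE)
  obtain A where A: "A \<in> Xs" "rank A = num_mixed div 2 - 1" "A_of Xs (num_mixed div 2) = A"
    using A_of_exists[OF m1] by blast
  obtain B0 where B0: "B0 \<in> P" "mixed B0" "A = pos_part B0"
    using A(1) by (rule XsE) auto
  have partner_A: "partner A = neg_part B0"
    using partner_pos_part[OF B0(1,2)] B0 by simp
  have m2: "num_mixed + 1 - num_mixed div 2 = num_mixed div 2 + 1"
    "num_mixed - 1 - (num_mixed div 2 - 1) = num_mixed div 2"
    using m by (auto elim!: evenE)
  have "A_of Xs (num_mixed div 2 + 1) = partner A"
    using A_of_reflect[OF m1] A(3) m2(1) by simp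
  then have b: "b = Min (neg_part B0)"
    using ab partner_A by simp
  have rank_partner_A: "rank (neg_part B0) = num_mixed div 2"
    using rank_partner[OF A(1)] A(2) partner_A m2(2) by simp
  have ne: "pos_part B0 \<noteq> {}" "neg_part B0 \<noteq> {}"
    using B0 by (auto simp: mixed_def)
  have B0_lower: "pos_below_neg B0"
    using pos_below_neg_iff_lower_half[OF B0(1,2)] lower_half_iff A B0 m1 by auto
  have a: "a \<in> pos_part B0" "b \<in> neg_part B0"
    using ab(1) A(3) B0(3) b ne finite_pos_part[OF B0(1)] finite_neg_part[OF B0(1)] by simp_all
  have no_zero: "\<forall>Z\<in>P. uminus ` Z \<noteq> Z"
    using even_num_mixed_no_zero_block m(2) by blast
  have bounds: "(\<forall>p\<in>pos_part B. p \<le> a) \<and> (\<forall>q\<in>neg_part B. b \<le> q)"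
    if B: "B \<in> P" "pos_below_neg B" for B
  proof -
    note XB = pos_below_neg_ranks(1,2)[OF B]
    have "rank (pos_part B) \<le> rank A" "rank (neg_part B0) \<le> rank (neg_part B)"
      using pos_below_neg_ranks(3,4)[OF B] A(2) rank_partner_A by auto
    then have Max_le: "Max (pos_part B) \<le> a" "Max (neg_part B0) \<le> Max (neg_part B)"
      using rank_le_iff[OF XB(1) A(1)] rank_le_iff[OF partner_in_Xs[OF A(1)] XB(2)] partner_A ab(1) A(3)
      by simp_all
    have "p \<le> a" if "p \<in> pos_part B" for p
      using that Max_le(1) finite_pos_part[OF B(1)] by (meson Max_ge order_trans)
    moreover have "b \<le> q" if "q \<in> neg_part B" for q
      using that b Min_neg_part_le[OF B0(1,2) B(1) _ Max_le(2)] finite_neg_part[OF B0(1)] by (cases "B = B0") auto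
    ultimately show ?thesis by blast
  qed
  show "central_pair P a b"
    unfolding central_pair_def using B0(1) B0_lower a bounds no_zero by blast
qed


lemma snd_psi_empty_iff: "snd (psi n P) = XEmpty \<longleftrightarrow> (\<forall>B\<in>P. \<not> mixed B)"
proof
  assume "snd (psi n P) = XEmpty"
  then have "num_mixed = 0" unfolding snd_psi by (auto split: if_splits)
  then have "Xs = {}" using finite_Xs unfolding num_mixed_def by simp
  then show "\<forall>B\<in>P. \<not> mixed B" using XsI by blast
next
  assume no_mixed: "\<forall>B\<in>P. \<not> mixed B"
  show "snd (psi n P) = XEmpty"
  proof (cases "snd (psi n P)")
    case (XEdge i j)
    then obtain B where "B \<in> P" "pos_below_neg B"
      using snd_psi_edge unfolding central_pair_def by blast
    then show ?thesis using no_mixed pos_below_neg_mixed by blast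
  next
    case (XBlock D)
    then obtain Z where "Z \<in> P" "uminus ` Z = Z" using snd_psi_block by blast
    then show ?thesis using no_mixed zero_block_mixed by blast
  qed
qed

end

section \<open>Comparing two partitions\<close>

locale ncb_pair = p1: ncb_partition n P1 + p2: ncb_partition n P2 for n P1 P2
begin

abbreviation "\<sigma>1 \<equiv> (\<lambda>B. abs ` B) ` P1"

abbreviation "\<sigma>2 \<equiv> (\<lambda>B. abs ` B) ` P2"

lemma refines_abs_blocks: "refines P1 P2 \<Longrightarrow> refines \<sigma>1 \<sigma>2"
  unfolding refines_def
proof (rule ballI)
  fix D assume h: "\<forall>B\<in>P1. \<exists>C\<in>P2. B \<subseteq> C" "D \<in> \<sigma>1"
  then obtain B where B: "B \<in> P1" "D = abs ` B" by blast
  then obtain C where C: "C \<in> P2" "B \<subseteq> C" using h(1) by blast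
  have "abs ` C \<in> \<sigma>2" using C(1) by (rule imageI)
  moreover have "D \<subseteq> abs ` C" using B(2) C(2) by (simp add: image_mono)
  ultimately show "\<exists>C\<in>\<sigma>2. D \<subseteq> C" by blast
qed

lemma is_edge_abs_blocksD: "is_edge \<sigma>1 i j \<Longrightarrow> \<exists>B\<in>P1. i < j \<and> i \<in> abs ` B \<and> j \<in> abs ` B \<and> (\<forall>k\<in>abs ` B. \<not> (i < k \<and> k < j))"
  unfolding is_edge_def by blast

lemma abs_subset_mem:
  assumes h: "B \<in> P1" "C \<in> P2" "abs ` B \<subseteq> abs ` C" "k \<in> B"
  shows "k \<in> C \<or> -k \<in> C"
proof -
  have "\<bar>k\<bar> \<in> abs ` C" using h by auto
  then obtain c where c: "c \<in> C" "\<bar>k\<bar> = \<bar>c\<bar>" by auto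
  hence "k = c \<or> k = -c" by arith
  thus ?thesis using c by auto
qed

lemma refinesI_normalized:
  assumes ref: "refines \<sigma>1 \<sigma>2"
    and normalized_subset: "\<And>B C. B \<in> P1 \<Longrightarrow> C \<in> P2 \<Longrightarrow> abs ` B \<subseteq> abs ` C
      \<Longrightarrow> normalized B \<Longrightarrow> normalized C \<Longrightarrow> B \<subseteq> C \<or> B \<subseteq> uminus ` C"
  shows "refines P1 P2"
  unfolding refines_def
proof
  fix B assume B: "B \<in> P1"
  obtain C where C: "C \<in> P2" "abs ` B \<subseteq> abs ` C"
    using ref B unfolding refines_def by auto
  obtain B' where B': "B' \<in> {B, uminus ` B}" "normalized B'"
    using p1.normalized_representative[OF B] .
  obtain C' where C': "C' \<in> {C, uminus ` C}" "normalized C'"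
    using p2.normalized_representative[OF C(1)] .
  have "B' \<in> P1" "C' \<in> P2" "abs ` B' \<subseteq> abs ` C'"
    using B B' C C' p1.uminus_block p2.uminus_block by auto
  then have "B' \<subseteq> C' \<or> B' \<subseteq> uminus ` C'"
    using normalized_subset B'(2) C'(2) by blast
  then have "B \<subseteq> C \<or> B \<subseteq> uminus ` C"
    using B'(1) C'(1) by (auto simp: uminus_image_subset_iff)
  then show "\<exists>C\<in>P2. B \<subseteq> C"
    using C(1) p2.uminus_block by blast
qed

lemma refines_if_no_mixed:
  assumes ref: "refines \<sigma>1 \<sigma>2" and m1: "\<forall>B\<in>P1. \<not> mixed B" and m2: "\<forall>C\<in>P2. \<not> mixed C"
  shows "refines P1 P2"
proof (rule refinesI_normalized[OF ref])
  fix B C assume h: "B \<in> P1" "C \<in> P2" "abs ` B \<subseteq> abs ` C" "normalized B"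
    "normalized C"
  have "neg_part B = {}"
    using h(4) m1 h(1) pos_below_neg_mixed p1.zero_block_mixed[OF h(1)] unfolding normalized_def by blast
  moreover have "neg_part C = {}"
    using h(5) m2 h(2) pos_below_neg_mixed p2.zero_block_mixed[OF h(2)] unfolding normalized_def by blast
  ultimately show "B \<subseteq> C \<or> B \<subseteq> uminus ` C"
    using pure_block_subset[OF h(3) p1.zero_notin_block[OF h(1)] p2.zero_notin_block[OF h(2)]] by simp
qed

lemma pure_block_edge_across:
  assumes B: "B \<in> P1" "neg_part B = {}" and uv: "u \<in> B" "v \<in> B" "u \<le> L" "R \<le> v"
    and gap: "L < R" "\<forall>k\<in>B. k \<le> L \<or> R \<le> k"
  obtains i j where "is_edge \<sigma>1 i j" "i \<le> L" "R \<le> j" "i \<in> B" "j \<in> B"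
proof -
  obtain i j where e: "i \<in> B" "j \<in> B" "i \<le> L" "R \<le> j" "\<forall>k\<in>B. \<not> (i < k \<and> k < j)"
    using gap_between[OF p1.finite_block[OF B(1)] uv gap] by blast
  have "abs ` B = B"
    using abs_pure_block[OF p1.zero_notin_block[OF B(1)] B(2)] .
  then have "is_edge \<sigma>1 i j"
    unfolding is_edge_def using e gap(1) B(1) by (intro conjI bexI[of _ "abs ` B"]) auto
  then show thesis using that e by blast
qed

lemma pure_block_straddles:
  assumes B: "B \<in> P1" "neg_part B = {}" and C: "C \<in> P2" "abs ` B \<subseteq> abs ` C"
    and bounds: "\<forall>p\<in>pos_part C. p \<le> L" "\<forall>q\<in>neg_part C. R \<le> q" "L < R"
    and not_sub: "\<not> (B \<subseteq> C \<or> B \<subseteq> uminus ` C)"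
  obtains i j where "is_edge \<sigma>1 i j" "i \<le> L" "R \<le> j" "i \<in> B" "j \<in> B"
proof -
  have B_sub: "B \<subseteq> pos_part C \<union> neg_part C"
    using pure_block_subset_abs[OF C(2) p1.zero_notin_block[OF B(1)] p2.zero_notin_block[OF C(1)] B(2)] .
  obtain u v where "u \<in> B" "u \<notin> pos_part C" "v \<in> B" "v \<notin> neg_part C"
    using not_sub pos_part_subset neg_part_subset by blast
  moreover have "\<forall>k\<in>B. k \<le> L \<or> R \<le> k"
    using B_sub bounds by blast
  ultimately show thesis
    using pure_block_edge_across[OF B] B_sub bounds that by blast
qed

lemma pure_block_subset_below_central_pair:
  assumes inn2: "central_pair P2 a b" and B: "B \<in> P1" "neg_part B = {}"
    and C: "C \<in> P2" "abs ` B \<subseteq> abs ` C" "neg_part C = {} \<or> pos_below_neg C"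
    and no_pure_edge: "\<And>i j. is_edge \<sigma>1 i j \<Longrightarrow> i \<in> B \<Longrightarrow> j \<in> B \<Longrightarrow> i \<le> a \<Longrightarrow> b \<le> j \<Longrightarrow> False"
  shows "B \<subseteq> C \<or> B \<subseteq> uminus ` C"
proof (cases "neg_part C = {}")
  case True
  then show ?thesis
    using pure_block_subset[OF C(2) p1.zero_notin_block[OF B(1)] p2.zero_notin_block[OF C(1)] B(2)] by simp
next
  case False
  then have bdC: "\<forall>p\<in>pos_part C. p \<le> a" "\<forall>q\<in>neg_part C. b \<le> q"
    using C(3) p2.central_pair_bounds[OF inn2 C(1)] by auto
  show ?thesis
    using pure_block_straddles[OF B C(1,2) bdC p2.central_pair_less[OF inn2]] no_pure_edge by blast
qed

lemma pos_below_neg_subset_below_central_pair: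
  assumes inn2: "central_pair P2 a b" and B: "B \<in> P1" "pos_below_neg B"
    and C: "C \<in> P2" "abs ` B \<subseteq> abs ` C" "neg_part C = {} \<or> pos_below_neg C"
    and inn1: "central_pair P1 i j" "i \<le> a" "b \<le> j"
  shows "B \<subseteq> C"
proof -
  have zero: "0 \<notin> B" "0 \<notin> C"
    using p1.zero_notin_block[OF B(1)] p2.zero_notin_block[OF C(1)] .
  have ab: "a < b" using p2.central_pair_less[OF inn2] .
  have bdB: "\<forall>p\<in>pos_part B. p \<le> i" "\<forall>q\<in>neg_part B. j \<le> q"
    using p1.central_pair_bounds[OF inn1(1) B] by auto
  obtain p q where pq: "p \<in> pos_part B" "q \<in> neg_part B"
    using B(2) unfolding pos_below_neg_def mixed_def by blast
  show ?thesis
  proof (cases "neg_part C = {}")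
    case True
    have "p \<in> C" "q \<in> C"
      using pq C(2) abs_block[OF zero(1)] abs_pure_block[OF zero(2) True] by auto
    then show ?thesis
      using p2.central_pair_not_enclosed[OF inn2 C(1)] pos_partD[OF pq(1)] bdB pq inn1 by fastforce
  next
    case False
    then have bdC: "\<forall>p\<in>pos_part C. p \<le> a" "\<forall>q\<in>neg_part C. b \<le> q"
      using C(3) p2.central_pair_bounds[OF inn2 C(1)] by auto
    have "pos_part B \<inter> neg_part C = {}" "neg_part B \<inter> pos_part C = {}"
      using bdB bdC inn1 ab by fastforce+
    then show ?thesis
      using block_subset_if_parts_disjoint[OF zero C(2)] by simp
  qed
qed

lemma refines_if_central_pair:
  assumes ref: "refines \<sigma>1 \<sigma>2" and inn2: "central_pair P2 a b"
    and X1: "(\<exists>i j. central_pair P1 i j \<and> i \<le> a \<and> b \<le> j \<and>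
              (\<forall>i' j'. is_edge \<sigma>1 i' j' \<and> i' \<le> a \<and> a < b \<and> b \<le> j' \<and> (i', j') \<noteq> (i, j)
                  \<longrightarrow> j - i < j' - i'))
          \<or> ((\<forall>B\<in>P1. \<not> mixed B) \<and> \<not> (\<exists>i j. is_edge \<sigma>1 i j \<and> i \<le> a \<and> a < b \<and> b \<le> j))"
  shows "refines P1 P2"
proof (rule refinesI_normalized[OF ref])
  fix B C assume h: "B \<in> P1" "C \<in> P2" "abs ` B \<subseteq> abs ` C" "normalized B" "normalized C"
  have ab: "a < b" using p2.central_pair_less[OF inn2] .
  have central1: "\<exists>i j. central_pair P1 i j \<and> i \<le> a \<and> b \<le> j" if "mixed B"
    using X1 that h(1) by blast
  have "uminus ` B \<noteq> B"
    using central1 p1.zero_block_mixed[OF h(1)] p1.central_pair_no_zero[OF _ h(1)] by blast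
  then have hB: "neg_part B = {} \<or> pos_below_neg B"
    using h(4) unfolding normalized_def by blast
  have hC: "neg_part C = {} \<or> pos_below_neg C"
    using h(5) p2.central_pair_no_zero[OF inn2 h(2)] unfolding normalized_def by blast
  show "B \<subseteq> C \<or> B \<subseteq> uminus ` C"
  proof (cases "neg_part B = {}")
    case pure_B: True
    have False if e: "is_edge \<sigma>1 i' j'" "i' \<in> B" "j' \<in> B" "i' \<le> a" "b \<le> j'" for i' j'
    proof -
      consider (central) i j where "central_pair P1 i j" "i \<le> a" "b \<le> j"
          "\<forall>i' j'. is_edge \<sigma>1 i' j' \<and> i' \<le> a \<and> b \<le> j' \<and> (i', j') \<noteq> (i, j) \<longrightarrow> j - i < j' - i'"
        | (no_edge) "\<not> (\<exists>i j. is_edge \<sigma>1 i j \<and> i \<le> a \<and> a < b \<and> b \<le> j)"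
        using X1 ab by blast
      then show False
      proof cases
        case central
        have "0 < i'" "i' < j'"
          using p1.pure_block_pos[OF h(1) pure_B e(2)] e(4,5) ab by auto
        then have "i < i' \<and> j' < j"
          using p1.pure_block_central_pair[OF central(1) h(1) pure_B e(2,3)] e(4,5) central(2,3) ab by auto
        then show False using central(4) e by fastforce
      next
        case no_edge
        then show False using e ab by blast
      qed
    qed
    then show ?thesis
      using pure_block_subset_below_central_pair[OF inn2 h(1) pure_B h(2,3) hC] by blast
  next
    case False
    then have lB: "pos_below_neg B" using hB by simp
    then obtain i j where "central_pair P1 i j" "i \<le> a" "b \<le> j"
      using central1 pos_below_neg_mixed by blast
    then show ?thesis
      using pos_below_neg_subset_below_central_pair[OF inn2 h(1) lB h(2,3) hC] by blast
  qed
qed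

lemma pure_block_refined:
  assumes h: "refines P1 P2" "B \<in> P1" "\<not> mixed B" "u \<in> abs ` B" "v \<in> abs ` B"
  shows "\<exists>C\<in>P2. u \<in> C \<and> v \<in> C"
proof -
  obtain B' where B': "B' \<in> P1" "neg_part B' = {}" "abs ` B' = abs ` B"
  proof (cases "neg_part B = {}")
    case True thus ?thesis using that h(2) by blast
  next
    case False
    hence "pos_part B = {}" using h(3) unfolding mixed_def by simp
    hence "neg_part (uminus ` B) = {}" by simp
    thus ?thesis using that p1.uminus_block[OF h(2)] by (metis abs_image_uminus)
  qed
  have "u \<in> B'" "v \<in> B'"
    using h(4,5) B'(3) abs_pure_block[OF p1.zero_notin_block[OF B'(1)] B'(2)] by auto
  moreover obtain C where "C \<in> P2" "B' \<subseteq> C"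
    using h(1) B'(1) unfolding refines_def by blast
  ultimately show ?thesis by blast
qed

lemma zero_block_superset:
  assumes h: "B \<in> P1" "C \<in> P2" "B \<subseteq> C" "uminus ` B = B"
  shows "uminus ` C = C"
proof -
  obtain k where k: "k \<in> B" using p1.block_nonempty[OF h(1)] by blast
  have "-k \<in> B" using k h(4) by (metis imageI)
  hence "k \<in> uminus ` C" using h(3) mem_uminus_imageI[of k C] by auto
  moreover have "k \<in> C" using k h(3) by auto
  ultimately have "C = uminus ` C" using p2.block_eq[OF h(2) p2.uminus_block[OF h(2)]] by blast
  thus ?thesis by simp
qed

lemma pure_block_subset_around_zero_block:
  assumes Z2: "Z2 \<in> P2" "uminus ` Z2 = Z2" and B: "B \<in> P1" "neg_part B = {}"
    and C: "C \<in> P2" "abs ` B \<subseteq> abs ` C" "neg_part C = {} \<or> pos_below_neg C" "C \<noteq> Z2"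
    and no_pure_edge: "\<And>i j. is_edge \<sigma>1 i j \<Longrightarrow> i \<in> B \<Longrightarrow> j \<in> B
      \<Longrightarrow> i < Min (pos_part Z2) \<Longrightarrow> Max (pos_part Z2) < j \<Longrightarrow> False"
  shows "B \<subseteq> C \<or> B \<subseteq> uminus ` C"
proof (cases "neg_part C = {}")
  case True
  then show ?thesis
    using pure_block_subset[OF C(2) p1.zero_notin_block[OF B(1)] p2.zero_notin_block[OF C(1)] B(2)] by simp
next
  case False
  then have "pos_below_neg C" using C(3) by simp
  moreover have "Min (pos_part Z2) \<in> pos_part Z2" "Max (pos_part Z2) \<in> pos_part Z2"
    "Min (pos_part Z2) \<le> Max (pos_part Z2)"
    using p2.zero_block_pos_part[OF Z2] by auto
  ultimately have bounds: "\<forall>p\<in>pos_part C. p \<le> Min (pos_part Z2) - 1"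
    "\<forall>q\<in>neg_part C. Max (pos_part Z2) + 1 \<le> q" "Min (pos_part Z2) - 1 < Max (pos_part Z2) + 1"
    using p2.zero_block_inside[OF Z2 C(1)] by fastforce+
  show ?thesis
  proof (rule ccontr)
    assume "\<not> ?thesis"
    then obtain i j where e: "is_edge \<sigma>1 i j" "i \<le> Min (pos_part Z2) - 1" "Max (pos_part Z2) + 1 \<le> j"
      "i \<in> B" "j \<in> B"
      using pure_block_straddles[OF B C(1,2) bounds] by blast
    show False
      by (rule no_pure_edge[OF e(1,4,5)]) (use e(2,3) in linarith)+
  qed
qed

lemma pos_below_neg_subset_around_zero_block:
  assumes Z2: "Z2 \<in> P2" "uminus ` Z2 = Z2" and B: "B \<in> P1" "pos_below_neg B"
    and C: "C \<in> P2" "abs ` B \<subseteq> abs ` C" "neg_part C = {} \<or> pos_below_neg C" "C \<noteq> Z2"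
    and c: "c \<in> pos_part Z2" "\<forall>p\<in>pos_part B. p \<le> c" "\<forall>q\<in>neg_part B. c \<le> q"
  shows "B \<subseteq> C"
proof -
  have zero: "0 \<notin> B" "0 \<notin> C"
    using p1.zero_notin_block[OF B(1)] p2.zero_notin_block[OF C(1)] .
  obtain p q where pq: "p \<in> pos_part B" "q \<in> neg_part B"
    using B(2) unfolding pos_below_neg_def mixed_def by blast
  have pq_abs: "p \<in> abs ` C" "q \<in> abs ` C"
    using pq C(2) abs_block[OF zero(1)] by auto
  then have pq_c: "p < c" "c < q"
    using p2.zero_block_abs_hit[OF Z2 C(1) c(1)] C(4) c pq by fastforce+
  show ?thesis
  proof (cases "neg_part C = {}")
    case True
    have "p \<in> C" "q \<in> C"
      using pq_abs abs_pure_block[OF zero(2) True] by simp_all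
    then show ?thesis
      using p2.zero_block_not_enclosed[OF Z2 C(1,4) _ _ _ pq_c c(1)] pos_partD[OF pq(1)] by blast
  next
    case False
    then have C_sep: "\<forall>p\<in>pos_part C. p < Min (pos_part Z2)" "\<forall>q\<in>neg_part C. Max (pos_part Z2) < q"
      using C(3) p2.zero_block_inside[OF Z2 C(1)] p2.zero_block_pos_part[OF Z2] by auto
    have c_bounds: "Min (pos_part Z2) \<le> c" "c \<le> Max (pos_part Z2)"
      using c(1) p2.zero_block_pos_part[OF Z2] by auto
    have "pos_part B \<inter> neg_part C = {}"
    proof (intro equalityI subsetI, elim IntE)
      fix x assume "x \<in> pos_part B" "x \<in> neg_part C"
      then have "x \<le> c" "Max (pos_part Z2) < x" using c(2) C_sep by blast+
      then show "x \<in> {}" using c_bounds by linarith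
    qed simp
    moreover have "neg_part B \<inter> pos_part C = {}"
    proof (intro equalityI subsetI, elim IntE)
      fix x assume "x \<in> neg_part B" "x \<in> pos_part C"
      then have "c \<le> x" "x < Min (pos_part Z2)" using c(3) C_sep by blast+
      then show "x \<in> {}" using c_bounds by linarith
    qed simp
    ultimately show ?thesis
      using block_subset_if_parts_disjoint[OF zero C(2)] by simp
  qed
qed

lemma refines_if_zero_block:
  assumes ref: "refines \<sigma>1 \<sigma>2" and Z2: "Z2 \<in> P2" "uminus ` Z2 = Z2"
    and lower_sep: "\<And>B. B \<in> P1 \<Longrightarrow> pos_below_neg B
      \<Longrightarrow> \<exists>c\<in>pos_part Z2. (\<forall>p\<in>pos_part B. p \<le> c) \<and> (\<forall>q\<in>neg_part B. c \<le> q)"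
    and zero_sub: "\<And>Z. Z \<in> P1 \<Longrightarrow> uminus ` Z = Z \<Longrightarrow> pos_part Z \<subseteq> pos_part Z2"
    and no_pure_edge: "\<And>B i j. B \<in> P1 \<Longrightarrow> neg_part B = {} \<Longrightarrow> is_edge \<sigma>1 i j \<Longrightarrow> i \<in> B \<Longrightarrow> j \<in> B
      \<Longrightarrow> i < Min (pos_part Z2) \<Longrightarrow> Max (pos_part Z2) < j \<Longrightarrow> False"
  shows "refines P1 P2"
proof (rule refinesI_normalized[OF ref])
  fix B C assume h: "B \<in> P1" "C \<in> P2" "abs ` B \<subseteq> abs ` C" "normalized B" "normalized C"
  show "B \<subseteq> C \<or> B \<subseteq> uminus ` C"
  proof (cases "uminus ` C = C")
    case True
    then show ?thesis
      using abs_subset_mem[OF h(1,2,3)] mem_uminus_imageI by blast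
  next
    case False
    then have C: "neg_part C = {} \<or> pos_below_neg C" "C \<noteq> Z2"
      using h(5) Z2(2) unfolding normalized_def by auto
    consider (zero_B) "uminus ` B = B" | (pure_B) "neg_part B = {}" | (lower_B) "pos_below_neg B"
      using h(4) unfolding normalized_def by blast
    then show ?thesis
    proof cases
      case zero_B
      obtain k where k: "k \<in> pos_part B"
        using p1.zero_block_pos_part[OF h(1) zero_B] by blast
      then have "k \<in> abs ` C"
        using h(3) abs_block[OF p1.zero_notin_block[OF h(1)]] by blast
      moreover have "k \<in> pos_part Z2"
        using zero_sub[OF h(1) zero_B] k by blast
      ultimately show ?thesis
        using p2.zero_block_abs_hit[OF Z2 h(2)] C(2) by blast
    next
      case pure_B
      then show ?thesis
        using pure_block_subset_around_zero_block[OF Z2 h(1) pure_B h(2,3) C] no_pure_edge[OF h(1) pure_B]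
        by blast
    next
      case lower_B
      then show ?thesis
        using pos_below_neg_subset_around_zero_block[OF Z2 h(1) lower_B h(2,3) C] lower_sep[OF h(1)] by blast
    qed
  qed
qed

lemma refines_block_block:
  assumes ref: "refines \<sigma>1 \<sigma>2" and Z2: "Z2 \<in> P2" "uminus ` Z2 = Z2"
    and Z1: "Z1 \<in> P1" "uminus ` Z1 = Z1" and sub: "pos_part Z1 \<subseteq> pos_part Z2"
  shows "refines P1 P2"
proof (rule refines_if_zero_block[OF ref Z2])
  obtain d where d: "d \<in> pos_part Z1" using p1.zero_block_pos_part[OF Z1] by blast
  then have dZ2: "d \<in> pos_part Z2" "Min (pos_part Z2) \<le> d" "d \<le> Max (pos_part Z2)"
    using sub p2.zero_block_pos_part[OF Z2] by auto
  show "\<exists>c\<in>pos_part Z2. (\<forall>p\<in>pos_part B. p \<le> c) \<and> (\<forall>q\<in>neg_part B. c \<le> q)"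
    if "B \<in> P1" "pos_below_neg B" for B
    using p1.zero_block_inside[OF Z1 that d] dZ2(1) by (meson less_imp_le)
  show "pos_part Z \<subseteq> pos_part Z2" if "Z \<in> P1" "uminus ` Z = Z" for Z
    using p1.zero_block_unique[OF that(1) Z1(1) that(2) Z1(2)] sub by simp
  show False if B: "B \<in> P1" "neg_part B = {}" and e: "is_edge \<sigma>1 i j" "i \<in> B" "j \<in> B"
    and around: "i < Min (pos_part Z2)" "Max (pos_part Z2) < j" for B i j
  proof -
    have "B \<noteq> Z1"
      using B(2) p1.zero_block_pos_part[OF Z1] zero_block_pos_eq_neg[OF Z1(2)] by auto
    moreover have "0 < i"
      using p1.pure_block_pos[OF B e(2)] .
    ultimately show False
      using p1.zero_block_not_enclosed[OF Z1 B(1) _ e(2,3)] around dZ2 d by fastforce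
  qed
qed

lemma refines_edge_in_block:
  assumes ref: "refines \<sigma>1 \<sigma>2" and Z2: "Z2 \<in> P2" "uminus ` Z2 = Z2"
    and inn: "central_pair P1 i j" and ij: "i \<in> pos_part Z2" "j \<in> pos_part Z2"
  shows "refines P1 P2"
proof (rule refines_if_zero_block[OF ref Z2])
  have fin: "finite (pos_part Z2)" using p2.zero_block_pos_part[OF Z2] by simp
  show "\<exists>c\<in>pos_part Z2. (\<forall>p\<in>pos_part B. p \<le> c) \<and> (\<forall>q\<in>neg_part B. c \<le> q)"
    if "B \<in> P1" "pos_below_neg B" for B
    using p1.central_pair_bounds[OF inn that] p1.central_pair_less[OF inn] ij(1) by force
  show "pos_part Z \<subseteq> pos_part Z2" if "Z \<in> P1" "uminus ` Z = Z" for Z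
    using p1.central_pair_no_zero[OF inn that(1)] that(2) by blast
  show False if B: "B \<in> P1" "neg_part B = {}" and e: "is_edge \<sigma>1 u v" "u \<in> B" "v \<in> B"
    and around: "u < Min (pos_part Z2)" "Max (pos_part Z2) < v" for B u v
  proof -
    have "0 < u"
      using p1.pure_block_pos[OF B e(2)] .
    moreover have "u \<le> i" "j \<le> v"
      using around ij fin by (meson Min_le Max_ge less_imp_le order_trans)+
    ultimately show False
      using p1.central_pair_not_enclosed[OF inn B(1) e(2,3)] by blast
  qed
qed

lemma refines_edge_around_block:
  assumes ref: "refines \<sigma>1 \<sigma>2" and Z2: "Z2 \<in> P2" "uminus ` Z2 = Z2"
    and inn: "central_pair P1 i j" and ij: "i < Min (pos_part Z2)" "Max (pos_part Z2) < j"
    and shortest: "\<forall>i' j'. is_edge \<sigma>1 i' j' \<and> i' < Min (pos_part Z2) \<and> Max (pos_part Z2) < j'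
      \<longrightarrow> j - i \<le> j' - i'"
  shows "refines P1 P2"
proof (rule refines_if_zero_block[OF ref Z2])
  have Z2_ne: "Min (pos_part Z2) \<in> pos_part Z2" "Min (pos_part Z2) \<le> Max (pos_part Z2)"
    using p2.zero_block_pos_part[OF Z2] by auto
  show "\<exists>c\<in>pos_part Z2. (\<forall>p\<in>pos_part B. p \<le> c) \<and> (\<forall>q\<in>neg_part B. c \<le> q)"
    if "B \<in> P1" "pos_below_neg B" for B
  proof
    show "(\<forall>p\<in>pos_part B. p \<le> Min (pos_part Z2)) \<and> (\<forall>q\<in>neg_part B. Min (pos_part Z2) \<le> q)"
      using p1.central_pair_bounds[OF inn that] ij Z2_ne(2) by fastforce
  qed (rule Z2_ne(1))
  show "pos_part Z \<subseteq> pos_part Z2" if "Z \<in> P1" "uminus ` Z = Z" for Z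
    using p1.central_pair_no_zero[OF inn that(1)] that(2) by blast
  show False if B: "B \<in> P1" "neg_part B = {}" and e: "is_edge \<sigma>1 u v" "u \<in> B" "v \<in> B"
    and around: "u < Min (pos_part Z2)" "Max (pos_part Z2) < v" for B u v
  proof -
    have "0 < u" "u < v"
      using p1.pure_block_pos[OF B e(2)] around Z2_ne by auto
    then have "i < u \<and> v < j"
      using p1.pure_block_central_pair[OF inn B e(2,3)] around ij Z2_ne by auto
    then show False
      using shortest e(1) around by fastforce
  qed
qed

lemma refines_empty_around_block:
  assumes ref: "refines \<sigma>1 \<sigma>2" and Z2: "Z2 \<in> P2" "uminus ` Z2 = Z2"
    and no_mixed: "\<forall>B\<in>P1. \<not> mixed B"
    and no_edge: "\<not> (\<exists>i j. is_edge \<sigma>1 i j \<and> i < Min (pos_part Z2) \<and> Max (pos_part Z2) < j)"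
  shows "refines P1 P2"
proof (rule refines_if_zero_block[OF ref Z2])
  show "\<exists>c\<in>pos_part Z2. (\<forall>p\<in>pos_part B. p \<le> c) \<and> (\<forall>q\<in>neg_part B. c \<le> q)"
    if "B \<in> P1" "pos_below_neg B" for B
    using no_mixed that pos_below_neg_mixed by blast
  show "pos_part Z \<subseteq> pos_part Z2" if "Z \<in> P1" "uminus ` Z = Z" for Z
    using no_mixed that p1.zero_block_mixed by blast
  show False if "B \<in> P1" "neg_part B = {}" "is_edge \<sigma>1 i j" "i \<in> B" "j \<in> B"
    "i < Min (pos_part Z2)" "Max (pos_part Z2) < j" for B i j
    using no_edge that by blast
qed

lemma pos_below_neg_superset:
  assumes h: "B1 \<in> P1" "pos_below_neg B1" "C \<in> P2" "B1 \<subseteq> C" "uminus ` C \<noteq> C"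
  shows "pos_below_neg C"
proof -
  obtain p q where pq: "p \<in> pos_part B1" "q \<in> neg_part B1"
    using h(2) unfolding pos_below_neg_def mixed_def by blast
  have pqlt: "p < q" using h(2) pq unfolding pos_below_neg_def by blast
  have s: "pos_part B1 \<subseteq> pos_part C" "neg_part B1 \<subseteq> neg_part C"
    using pos_neg_part_mono[OF h(4)] by auto
  have pqC: "p \<in> pos_part C" "q \<in> neg_part C" using pq s by auto
  hence mC: "mixed C" unfolding mixed_def by blast
  have "pos_below_neg C \<or> pos_below_neg (uminus ` C)"
    using p2.mixed_block_sorted[OF h(3) mC h(5)] .
  moreover have "\<not> pos_below_neg (uminus ` C)"
  proof
    assume "pos_below_neg (uminus ` C)"
    hence "\<forall>x\<in>neg_part C. \<forall>y\<in>pos_part C. x < y"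
      unfolding pos_below_neg_def by simp
    thus False using pqC pqlt by fastforce
  qed
  ultimately show ?thesis by simp
qed

lemma no_mixed_refined:
  assumes h: "refines P1 P2" "\<forall>C\<in>P2. \<not> mixed C" "B \<in> P1"
  shows "\<not> mixed B"
proof
  assume "mixed B"
  obtain C where C: "C \<in> P2" "B \<subseteq> C" using h(1,3) unfolding refines_def by blast
  have "mixed C" using \<open>mixed B\<close> pos_neg_part_mono[OF C(2)] unfolding mixed_def by blast
  thus False using h(2) C(1) by blast
qed

lemma zero_block_refined:
  assumes h: "refines P1 P2" "Z \<in> P1" "uminus ` Z = Z"
  shows "\<exists>C\<in>P2. uminus ` C = C \<and> Z \<subseteq> C"
proof -
  obtain C where C: "C \<in> P2" "Z \<subseteq> C" using h(1,2) unfolding refines_def by blast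
  thus ?thesis using zero_block_superset[OF h(2) C(1) C(2) h(3)] by blast
qed

lemma no_edge_over_central_pair:
  assumes ref: "refines P1 P2" and inn2: "central_pair P2 a b" and nm: "\<forall>B\<in>P1. \<not> mixed B"
  shows "\<not> (\<exists>i j. is_edge \<sigma>1 i j \<and> i \<le> a \<and> a < b \<and> b \<le> j)"
proof
  assume "\<exists>i j. is_edge \<sigma>1 i j \<and> i \<le> a \<and> a < b \<and> b \<le> j"
  then obtain i j where ij: "is_edge \<sigma>1 i j" "i \<le> a" "b \<le> j" by blast
  obtain B where B: "B \<in> P1" "i \<in> abs ` B" "j \<in> abs ` B"
    using is_edge_abs_blocksD[OF ij(1)] by blast
  obtain C where C: "C \<in> P2" "i \<in> C" "j \<in> C"
    using pure_block_refined[OF ref B(1) _ B(2) B(3)] nm B(1) by blast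
  have "0 < i" using p1.abs_block_pos[OF B(1) B(2)] .
  thus False using p2.central_pair_not_enclosed[OF inn2 C(1) C(2) C(3) _ ij(2) ij(3)] by blast
qed

lemma central_pair_refined:
  assumes ref: "refines P1 P2" and inn2: "central_pair P2 a b" and inn1: "central_pair P1 i j"
  shows "i \<le> a \<and> b \<le> j \<and> (\<forall>i' j'. is_edge \<sigma>1 i' j' \<and> i' \<le> a \<and> a < b \<and> b \<le> j' \<and> (i', j') \<noteq> (i, j)
                  \<longrightarrow> j - i < j' - i')"
proof -
  obtain B1 where B1: "B1 \<in> P1" "pos_below_neg B1" "i \<in> pos_part B1" "j \<in> neg_part B1"
    using inn1 unfolding central_pair_def by blast
  obtain C where C: "C \<in> P2" "B1 \<subseteq> C" using ref B1(1) unfolding refines_def by blast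
  have lC: "pos_below_neg C"
    using pos_below_neg_superset[OF B1(1,2) C(1,2) p2.central_pair_no_zero[OF inn2 C(1)]] .
  have s: "pos_part B1 \<subseteq> pos_part C" "neg_part B1 \<subseteq> neg_part C"
    using pos_neg_part_mono[OF C(2)] by auto
  have bd: "\<forall>p\<in>pos_part C. p \<le> a" "\<forall>q\<in>neg_part C. b \<le> q"
    using p2.central_pair_bounds[OF inn2 C(1) lC] by auto
  have ia: "i \<le> a" using bd(1) s(1) B1(3) by blast
  have bj: "b \<le> j" using bd(2) s(2) B1(4) by blast
  have ab: "a < b" using p2.central_pair_less[OF inn2] .
  have "\<forall>i' j'. is_edge \<sigma>1 i' j' \<and> i' \<le> a \<and> a < b \<and> b \<le> j' \<and> (i', j') \<noteq> (i, j) \<longrightarrow> j - i < j' - i'"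
  proof (intro allI impI)
    fix i' j' assume h: "is_edge \<sigma>1 i' j' \<and> i' \<le> a \<and> a < b \<and> b \<le> j' \<and> (i', j') \<noteq> (i, j)"
    obtain B where B: "B \<in> P1" "i' \<in> abs ` B" "j' \<in> abs ` B"
      using is_edge_abs_blocksD h by blast
    show "j - i < j' - i'"
    proof (cases "mixed B")
      case False
      obtain C' where C': "C' \<in> P2" "i' \<in> C'" "j' \<in> C'"
        using pure_block_refined[OF ref B(1) False B(2) B(3)] by blast
      have "0 < i'" using p1.abs_block_pos[OF B(1) B(2)] .
      thus ?thesis using p2.central_pair_not_enclosed[OF inn2 C'(1) C'(2) C'(3)] h by blast
    next
      case True
      have "j' \<le> i \<or> j \<le> i' \<or> (i' \<le> i \<and> j \<le> j')"
        using p1.mixed_edge_central_pair[OF inn1 B(1) True B(2) B(3)] .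
      thus ?thesis using h ia bj ab by auto
    qed
  qed
  thus ?thesis using ia bj by blast
qed

lemma zero_block_pos_part_refined:
  assumes h: "refines P1 P2" "Z2 \<in> P2" "uminus ` Z2 = Z2" "Z1 \<in> P1" "uminus ` Z1 = Z1"
  shows "pos_part Z1 \<subseteq> pos_part Z2"
proof -
  obtain C where C: "C \<in> P2" "uminus ` C = C" "Z1 \<subseteq> C"
    using zero_block_refined[OF h(1,4,5)] by blast
  have "C = Z2" using p2.zero_block_unique[OF C(1) h(2) C(2) h(3)] .
  thus ?thesis using pos_neg_part_mono[OF C(3)] by simp
qed

lemma no_edge_over_zero_block:
  assumes ref: "refines P1 P2" and Z2: "Z2 \<in> P2" "uminus ` Z2 = Z2" and nm: "\<forall>B\<in>P1. \<not> mixed B"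
  shows "\<not> (\<exists>i j. is_edge \<sigma>1 i j \<and> i < Min (pos_part Z2) \<and> Max (pos_part Z2) < j)"
proof
  assume "\<exists>i j. is_edge \<sigma>1 i j \<and> i < Min (pos_part Z2) \<and> Max (pos_part Z2) < j"
  then obtain i j where ij: "is_edge \<sigma>1 i j" "i < Min (pos_part Z2)" "Max (pos_part Z2) < j" by blast
  obtain B where B: "B \<in> P1" "i \<in> abs ` B" "j \<in> abs ` B"
    using is_edge_abs_blocksD[OF ij(1)] by blast
  obtain C where C: "C \<in> P2" "i \<in> C" "j \<in> C"
    using pure_block_refined[OF ref B(1) _ B(2) B(3)] nm B(1) by blast
  have "0 < i" using p1.abs_block_pos[OF B(1) B(2)] .
  thus False using p2.zero_block_not_straddled[OF Z2 C(1) C(2) C(3) _ ij(2) ij(3)] by blast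
qed

lemma central_pair_vs_zero_block:
  assumes ref: "refines P1 P2" and Z2: "Z2 \<in> P2" "uminus ` Z2 = Z2" and inn1: "central_pair P1 i j"
  shows "(i \<in> pos_part Z2 \<and> j \<in> pos_part Z2) \<or> (i < Min (pos_part Z2) \<and> Max (pos_part Z2) < j \<and>
          (\<forall>i' j'. is_edge \<sigma>1 i' j' \<and> i' < Min (pos_part Z2) \<and> Max (pos_part Z2) < j' \<longrightarrow> j - i \<le> j' - i'))"
proof -
  obtain B1 where B1: "B1 \<in> P1" "pos_below_neg B1" "i \<in> pos_part B1" "j \<in> neg_part B1"
    using inn1 unfolding central_pair_def by blast
  obtain C where C: "C \<in> P2" "B1 \<subseteq> C" using ref B1(1) unfolding refines_def by blast
  have s: "pos_part B1 \<subseteq> pos_part C" "neg_part B1 \<subseteq> neg_part C"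
    using pos_neg_part_mono[OF C(2)] by auto
  have cm: "pos_part Z2 \<noteq> {}" "finite (pos_part Z2)" "Min (pos_part Z2) \<in> pos_part Z2" "Max (pos_part Z2) \<in> pos_part Z2" "Min (pos_part Z2) \<le> Max (pos_part Z2)"
    using p2.zero_block_pos_part[OF Z2] by auto
  show ?thesis
  proof (cases "C = Z2")
    case True
    have "i \<in> pos_part Z2" using s(1) B1(3) True by blast
    moreover have "j \<in> pos_part Z2"
      using s(2) B1(4) True zero_block_pos_eq_neg[OF Z2(2)] by auto
    ultimately show ?thesis by simp
  next
    case False
    have Cnz: "uminus ` C \<noteq> C"
      using p2.zero_block_unique[OF C(1) Z2(1) _ Z2(2)] False by blast
    have lC: "pos_below_neg C" using pos_below_neg_superset[OF B1(1,2) C(1,2) Cnz] .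
    have zl: "(\<forall>p\<in>pos_part C. \<forall>c\<in>pos_part Z2. p < c) \<and> (\<forall>q\<in>neg_part C. \<forall>c\<in>pos_part Z2. c < q)"
      using p2.zero_block_inside[OF Z2 C(1) lC] by blast
    have ii: "i < Min (pos_part Z2)" using zl s(1) B1(3) cm(3) by blast
    have jj: "Max (pos_part Z2) < j" using zl s(2) B1(4) cm(4) by blast
    have "\<forall>i' j'. is_edge \<sigma>1 i' j' \<and> i' < Min (pos_part Z2) \<and> Max (pos_part Z2) < j' \<longrightarrow> j - i \<le> j' - i'"
    proof (intro allI impI)
      fix i' j' assume h: "is_edge \<sigma>1 i' j' \<and> i' < Min (pos_part Z2) \<and> Max (pos_part Z2) < j'"
      obtain B where B: "B \<in> P1" "i' \<in> abs ` B" "j' \<in> abs ` B"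
        using is_edge_abs_blocksD h by blast
      show "j - i \<le> j' - i'"
      proof (cases "mixed B")
        case False
        obtain C' where C': "C' \<in> P2" "i' \<in> C'" "j' \<in> C'"
          using pure_block_refined[OF ref B(1) False B(2) B(3)] by blast
        have "0 < i'" using p1.abs_block_pos[OF B(1) B(2)] .
        thus ?thesis using p2.zero_block_not_straddled[OF Z2 C'(1) C'(2) C'(3)] h by blast
      next
        case True
        have "j' \<le> i \<or> j \<le> i' \<or> (i' \<le> i \<and> j \<le> j')"
          using p1.mixed_edge_central_pair[OF inn1 B(1) True B(2) B(3)] .
        thus ?thesis using h ii jj cm(5) by auto
      qed
    qed
    thus ?thesis using ii jj by blast
  qed
qed
end

definition psi_order :: "int set set \<Rightarrow> int set set \<Rightarrow> xval \<Rightarrow> xval \<Rightarrow> bool" where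
  "psi_order \<sigma>1 \<sigma>2 x1 x2 \<longleftrightarrow>
    ( (x1 = XEmpty \<and> x2 = XEmpty)
    \<or> (\<exists>a b. x2 = XEdge a b \<and> is_edge \<sigma>2 a b \<and>
         ((\<exists>i j. x1 = XEdge i j \<and> is_edge \<sigma>1 i j \<and> i \<le> a \<and> a < b \<and> b \<le> j \<and>
              (\<forall>i' j'. is_edge \<sigma>1 i' j' \<and> i' \<le> a \<and> a < b \<and> b \<le> j' \<and> (i', j') \<noteq> (i, j)
                  \<longrightarrow> j - i < j' - i'))
          \<or> (x1 = XEmpty \<and> \<not> (\<exists>i j. is_edge \<sigma>1 i j \<and> i \<le> a \<and> a < b \<and> b \<le> j))))
    \<or> (\<exists>C D. x2 = XBlock C \<and> C \<in> \<sigma>2 \<and> x1 = XBlock D \<and> D \<in> \<sigma>1 \<and> D \<subseteq> C)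
    \<or> (\<exists>C i j. x2 = XBlock C \<and> C \<in> \<sigma>2 \<and> x1 = XEdge i j \<and> is_edge \<sigma>1 i j \<and> i \<in> C \<and> j \<in> C)
    \<or> (\<exists>C. x2 = XBlock C \<and> C \<in> \<sigma>2 \<and>
         ((\<exists>i j. x1 = XEdge i j \<and> is_edge \<sigma>1 i j \<and> i < Min C \<and> Max C < j \<and>
              (\<forall>i' j'. is_edge \<sigma>1 i' j' \<and> i' < Min C \<and> Max C < j' \<longrightarrow> j - i \<le> j' - i'))
          \<or> (x1 = XEmpty \<and> \<not> (\<exists>i j. is_edge \<sigma>1 i j \<and> i < Min C \<and> Max C < j)))) )"

lemma psi_order_XEmpty_iff: "psi_order \<sigma>1 \<sigma>2 x1 XEmpty \<longleftrightarrow> x1 = XEmpty"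
  by (simp add: psi_order_def)

lemma psi_order_XEdgeD: "psi_order \<sigma>1 \<sigma>2 x1 (XEdge a b) \<Longrightarrow>
   (\<exists>i j. x1 = XEdge i j \<and> i \<le> a \<and> b \<le> j \<and>
      (\<forall>i' j'. is_edge \<sigma>1 i' j' \<and> i' \<le> a \<and> a < b \<and> b \<le> j' \<and> (i', j') \<noteq> (i, j) \<longrightarrow> j - i < j' - i'))
   \<or> (x1 = XEmpty \<and> \<not> (\<exists>i j. is_edge \<sigma>1 i j \<and> i \<le> a \<and> a < b \<and> b \<le> j))"
  unfolding psi_order_def by blast

lemma psi_order_XBlockD: "psi_order \<sigma>1 \<sigma>2 x1 (XBlock C) \<Longrightarrow>
      (\<exists>D. x1 = XBlock D \<and> D \<subseteq> C)
      \<or> (\<exists>i j. x1 = XEdge i j \<and> i \<in> C \<and> j \<in> C)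
      \<or> (\<exists>i j. x1 = XEdge i j \<and> i < Min C \<and> Max C < j \<and>
              (\<forall>i' j'. is_edge \<sigma>1 i' j' \<and> i' < Min C \<and> Max C < j' \<longrightarrow> j - i \<le> j' - i'))
      \<or> (x1 = XEmpty \<and> \<not> (\<exists>i j. is_edge \<sigma>1 i j \<and> i < Min C \<and> Max C < j))"
  unfolding psi_order_def by blast

lemma psi_order_edge_edgeI:
  "is_edge \<sigma>2 a b \<Longrightarrow> is_edge \<sigma>1 i j \<Longrightarrow> i \<le> a \<Longrightarrow> a < b \<Longrightarrow> b \<le> j \<Longrightarrow>
   (\<forall>i' j'. is_edge \<sigma>1 i' j' \<and> i' \<le> a \<and> a < b \<and> b \<le> j' \<and> (i', j') \<noteq> (i, j) \<longrightarrow> j - i < j' - i')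
   \<Longrightarrow> psi_order \<sigma>1 \<sigma>2 (XEdge i j) (XEdge a b)"
  unfolding psi_order_def by (rule disjI2, rule disjI1) blast

lemma psi_order_empty_edgeI:
  "is_edge \<sigma>2 a b \<Longrightarrow> \<not> (\<exists>i j. is_edge \<sigma>1 i j \<and> i \<le> a \<and> a < b \<and> b \<le> j)
   \<Longrightarrow> psi_order \<sigma>1 \<sigma>2 XEmpty (XEdge a b)"
  unfolding psi_order_def by (rule disjI2, rule disjI1) blast

lemma psi_order_block_blockI:
  "C \<in> \<sigma>2 \<Longrightarrow> D \<in> \<sigma>1 \<Longrightarrow> D \<subseteq> C \<Longrightarrow> psi_order \<sigma>1 \<sigma>2 (XBlock D) (XBlock C)"
  unfolding psi_order_def by (rule disjI2, rule disjI2, rule disjI1) blast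

lemma psi_order_edge_in_blockI:
  "C \<in> \<sigma>2 \<Longrightarrow> is_edge \<sigma>1 i j \<Longrightarrow> i \<in> C \<Longrightarrow> j \<in> C \<Longrightarrow> psi_order \<sigma>1 \<sigma>2 (XEdge i j) (XBlock C)"
  unfolding psi_order_def by (rule disjI2, rule disjI2, rule disjI2, rule disjI1) blast

lemma psi_order_edge_around_blockI:
  "C \<in> \<sigma>2 \<Longrightarrow> is_edge \<sigma>1 i j \<Longrightarrow> i < Min C \<Longrightarrow> Max C < j \<Longrightarrow>
   (\<forall>i' j'. is_edge \<sigma>1 i' j' \<and> i' < Min C \<and> Max C < j' \<longrightarrow> j - i \<le> j' - i')
   \<Longrightarrow> psi_order \<sigma>1 \<sigma>2 (XEdge i j) (XBlock C)"
  unfolding psi_order_def by (rule disjI2, rule disjI2, rule disjI2, rule disjI2) blast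

lemma psi_order_empty_around_blockI:
  "C \<in> \<sigma>2 \<Longrightarrow> \<not> (\<exists>i j. is_edge \<sigma>1 i j \<and> i < Min C \<and> Max C < j)
   \<Longrightarrow> psi_order \<sigma>1 \<sigma>2 XEmpty (XBlock C)"
  unfolding psi_order_def by (rule disjI2, rule disjI2, rule disjI2, rule disjI2) blast

context ncb_pair
begin

lemma psi_order_if_refines_XEmpty:
  assumes ref: "refines P1 P2" and x2: "snd (psi n P2) = XEmpty"
  shows "psi_order \<sigma>1 \<sigma>2 (snd (psi n P1)) XEmpty"
  using no_mixed_refined[OF ref] x2 unfolding psi_order_XEmpty_iff p1.snd_psi_empty_iff p2.snd_psi_empty_iff
  by blast

lemma psi_order_if_refines_XEdge:
  assumes ref: "refines P1 P2" and x2: "snd (psi n P2) = XEdge a b"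
  shows "psi_order \<sigma>1 \<sigma>2 (snd (psi n P1)) (XEdge a b)"
proof -
  have inn2: "central_pair P2 a b" using p2.snd_psi_edge[OF x2] .
  have e2: "is_edge \<sigma>2 a b" using p2.central_pair_edge[OF inn2] .
  have ab: "a < b" using p2.central_pair_less[OF inn2] .
  show ?thesis
  proof (cases "snd (psi n P1)")
    case XEmpty
    then have "\<forall>B\<in>P1. \<not> mixed B" using p1.snd_psi_empty_iff by blast
    then show ?thesis
      using XEmpty psi_order_empty_edgeI[OF e2 no_edge_over_central_pair[OF ref inn2]] by simp
  next
    case (XEdge i j)
    have inn1: "central_pair P1 i j" using p1.snd_psi_edge[OF XEdge] .
    then show ?thesis
      using XEdge central_pair_refined[OF ref inn2 inn1]
        psi_order_edge_edgeI[OF e2 p1.central_pair_edge[OF inn1] _ ab] by simp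
  next
    case (XBlock D)
    then obtain Z where "Z \<in> P1" "uminus ` Z = Z" using p1.snd_psi_block by blast
    then show ?thesis
      using zero_block_refined[OF ref] p2.central_pair_no_zero[OF inn2] by blast
  qed
qed

lemma psi_order_if_refines_XBlock:
  assumes ref: "refines P1 P2" and x2: "snd (psi n P2) = XBlock C"
  shows "psi_order \<sigma>1 \<sigma>2 (snd (psi n P1)) (XBlock C)"
proof -
  obtain Z2 where Z2: "Z2 \<in> P2" "uminus ` Z2 = Z2" "C = pos_part Z2"
    using p2.snd_psi_block[OF x2] by blast
  have C: "C \<in> \<sigma>2" using Z2 p2.abs_zero_block[OF Z2(1,2)] by (metis image_eqI)
  show ?thesis
  proof (cases "snd (psi n P1)")
    case XEmpty
    then have "\<forall>B\<in>P1. \<not> mixed B" using p1.snd_psi_empty_iff by blast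
    then show ?thesis
      using XEmpty psi_order_empty_around_blockI[OF C] no_edge_over_zero_block[OF ref Z2(1,2)] Z2(3) by simp
  next
    case (XEdge i j)
    have inn1: "central_pair P1 i j" using p1.snd_psi_edge[OF XEdge] .
    then show ?thesis
      using XEdge central_pair_vs_zero_block[OF ref Z2(1,2) inn1] Z2(3)
        psi_order_edge_in_blockI[OF C p1.central_pair_edge[OF inn1]]
        psi_order_edge_around_blockI[OF C p1.central_pair_edge[OF inn1]] by auto
  next
    case (XBlock D)
    then obtain Z1 where Z1: "Z1 \<in> P1" "uminus ` Z1 = Z1" "D = pos_part Z1"
      using p1.snd_psi_block by blast
    have "D \<in> \<sigma>1"
      using p1.abs_zero_block[OF Z1(1,2)] Z1 by (metis image_eqI)
    moreover have "D \<subseteq> C"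
      using zero_block_pos_part_refined[OF ref Z2(1,2) Z1(1,2)] Z1(3) Z2(3) by simp
    ultimately show ?thesis
      using XBlock psi_order_block_blockI[OF C] by simp
  qed
qed

lemma refines_if_psi_order_XEdge:
  assumes ref: "refines \<sigma>1 \<sigma>2" and x2: "snd (psi n P2) = XEdge a b"
    and order: "psi_order \<sigma>1 \<sigma>2 (snd (psi n P1)) (XEdge a b)"
  shows "refines P1 P2"
proof (rule refines_if_central_pair[OF ref p2.snd_psi_edge[OF x2]])
  show "(\<exists>i j. central_pair P1 i j \<and> i \<le> a \<and> b \<le> j \<and>
          (\<forall>i' j'. is_edge \<sigma>1 i' j' \<and> i' \<le> a \<and> a < b \<and> b \<le> j' \<and> (i', j') \<noteq> (i, j)
              \<longrightarrow> j - i < j' - i'))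
      \<or> ((\<forall>B\<in>P1. \<not> mixed B) \<and> \<not> (\<exists>i j. is_edge \<sigma>1 i j \<and> i \<le> a \<and> a < b \<and> b \<le> j))"
    using psi_order_XEdgeD[OF order] p1.snd_psi_edge p1.snd_psi_empty_iff by blast
qed

lemma refines_if_psi_order_XBlock:
  assumes ref: "refines \<sigma>1 \<sigma>2" and x2: "snd (psi n P2) = XBlock C"
    and order: "psi_order \<sigma>1 \<sigma>2 (snd (psi n P1)) (XBlock C)"
  shows "refines P1 P2"
proof -
  obtain Z2 where Z2: "Z2 \<in> P2" "uminus ` Z2 = Z2" "C = pos_part Z2"
    using p2.snd_psi_block[OF x2] by blast
  from psi_order_XBlockD[OF order] show ?thesis
  proof (elim disjE exE conjE)
    fix D assume "snd (psi n P1) = XBlock D" "D \<subseteq> C"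
    then obtain Z1 where "Z1 \<in> P1" "uminus ` Z1 = Z1" "pos_part Z1 \<subseteq> pos_part Z2"
      using p1.snd_psi_block Z2(3) by metis
    then show ?thesis using refines_block_block[OF ref Z2(1,2)] by blast
  next
    fix i j assume "snd (psi n P1) = XEdge i j" "i \<in> C" "j \<in> C"
    then show ?thesis
      using refines_edge_in_block[OF ref Z2(1,2) p1.snd_psi_edge] Z2(3) by simp
  next
    fix i j assume "snd (psi n P1) = XEdge i j" "i < Min C" "Max C < j"
      "\<forall>i' j'. is_edge \<sigma>1 i' j' \<and> i' < Min C \<and> Max C < j' \<longrightarrow> j - i \<le> j' - i'"
    then show ?thesis
      using refines_edge_around_block[OF ref Z2(1,2) p1.snd_psi_edge] Z2(3) by simp
  next
    assume "snd (psi n P1) = XEmpty" "\<not> (\<exists>i j. is_edge \<sigma>1 i j \<and> i < Min C \<and> Max C < j)"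
    then show ?thesis
      using refines_empty_around_block[OF ref Z2(1,2)] p1.snd_psi_empty_iff Z2(3) by simp
  qed
qed

lemma refines_iff_psi_order:
  "refines P1 P2 \<longleftrightarrow> refines \<sigma>1 \<sigma>2 \<and> psi_order \<sigma>1 \<sigma>2 (snd (psi n P1)) (snd (psi n P2))"
proof (cases "snd (psi n P2)")
  case XEmpty
  have "refines P1 P2" if "refines \<sigma>1 \<sigma>2" "psi_order \<sigma>1 \<sigma>2 (snd (psi n P1)) (snd (psi n P2))"
  proof -
    have "snd (psi n P1) = XEmpty"
      using that(2) XEmpty psi_order_XEmpty_iff by simp
    then show ?thesis
      using refines_if_no_mixed[OF that(1)] XEmpty p1.snd_psi_empty_iff p2.snd_psi_empty_iff by blast
  qed
  then show ?thesis
    using psi_order_if_refines_XEmpty refines_abs_blocks XEmpty by auto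
next
  case (XEdge a b)
  then show ?thesis
    using psi_order_if_refines_XEdge refines_abs_blocks refines_if_psi_order_XEdge by auto
next
  case (XBlock C)
  then show ?thesis
    using psi_order_if_refines_XBlock refines_abs_blocks refines_if_psi_order_XBlock by auto
qed

end

theorem proposition3p4:
  fixes n :: nat and \<pi>1 \<pi>2 \<sigma>1 \<sigma>2 :: "int set set" and x1 x2 :: xval
  assumes "0 < n"
    and "\<pi>1 \<in> NCB n" and "\<pi>2 \<in> NCB n"
    and "psi n \<pi>1 = (\<sigma>1, x1)" and "psi n \<pi>2 = (\<sigma>2, x2)"
  shows "refines \<pi>1 \<pi>2 \<longleftrightarrow>
    refines \<sigma>1 \<sigma>2 \<and>
    ( (x1 = XEmpty \<and> x2 = XEmpty)
    \<or> (\<exists>a b. x2 = XEdge a b \<and> is_edge \<sigma>2 a b \<and>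
         ((\<exists>i j. x1 = XEdge i j \<and> is_edge \<sigma>1 i j \<and> i \<le> a \<and> a < b \<and> b \<le> j \<and>
              (\<forall>i' j'. is_edge \<sigma>1 i' j' \<and> i' \<le> a \<and> a < b \<and> b \<le> j' \<and> (i', j') \<noteq> (i, j)
                  \<longrightarrow> j - i < j' - i'))
          \<or> (x1 = XEmpty \<and> \<not> (\<exists>i j. is_edge \<sigma>1 i j \<and> i \<le> a \<and> a < b \<and> b \<le> j))))
    \<or> (\<exists>C D. x2 = XBlock C \<and> C \<in> \<sigma>2 \<and> x1 = XBlock D \<and> D \<in> \<sigma>1 \<and> D \<subseteq> C)
    \<or> (\<exists>C i j. x2 = XBlock C \<and> C \<in> \<sigma>2 \<and> x1 = XEdge i j \<and> is_edge \<sigma>1 i j \<and> i \<in> C \<and> j \<in> C)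
    \<or> (\<exists>C. x2 = XBlock C \<and> C \<in> \<sigma>2 \<and>
         ((\<exists>i j. x1 = XEdge i j \<and> is_edge \<sigma>1 i j \<and> i < Min C \<and> Max C < j \<and>
              (\<forall>i' j'. is_edge \<sigma>1 i' j' \<and> i' < Min C \<and> Max C < j' \<longrightarrow> j - i \<le> j' - i'))
          \<or> (x1 = XEmpty \<and> \<not> (\<exists>i j. is_edge \<sigma>1 i j \<and> i < Min C \<and> Max C < j)))) )"
proof -
  interpret t: ncb_pair n \<pi>1 \<pi>2
    unfolding ncb_pair_def ncb_partition_def using assms(2,3) by simp
  have s1: "\<sigma>1 = (\<lambda>B. abs ` B) ` \<pi>1" using t.p1.fst_psi assms(4) by simp
  have s2: "\<sigma>2 = (\<lambda>B. abs ` B) ` \<pi>2" using t.p2.fst_psi assms(5) by simp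
  have y1: "x1 = snd (psi n \<pi>1)" using assms(4) by simp
  have y2: "x2 = snd (psi n \<pi>2)" using assms(5) by simp
  have "refines \<pi>1 \<pi>2 \<longleftrightarrow> refines \<sigma>1 \<sigma>2 \<and> psi_order \<sigma>1 \<sigma>2 x1 x2"
    using t.refines_iff_psi_order unfolding s1 s2 y1 y2 .
  thus ?thesis unfolding psi_order_def .
qed
end
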